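(* Let $G$ be an open subgroup of a Cartan subgroup $C$ of $\mathrm{GL}_2(\mathbb{Z}_\ell)$ and let $n_0$ be the level of $G$. Then for all integers $a\geq n_0$ and $b\geq0$ we have $\mu_{a,b}=\ell^{-2(a-n_0)}\mu_{n_0,b}$.
   Context: Let $\ell$ be a prime. A Cartan subgroup of $\mathrm{GL}_2(\mathbb{Z}_\ell)$ is the unit group $R^\times$ of a quadratic ring $R$ over $\mathbb{Z}_\ell$ (a subring, containing $1$, of a reduced degree-2 $\mathbb{Q}_\ell$-algebra $F$, finitely generated as a $\mathbb{Z}_\ell$-module, with $\mathbb{Q}_\ell R=F$), embedded via its left-multiplication action on $R$ in a $\mathbb{Z}_\ell$-basis. For $X\subseteq\mathrm{GL}_2(\mathbb{Z}_\ell)$, $X(n)$ is its image in $\mathrm{GL}_2(\mathbb{Z}/\ell^n\mathbb{Z})$. The level $n_0$ of $G$ is the smallest positive integer $n$ with $[C(n):G(n)]=[C:G]$. Identify $M\in\mathrm{GL}_2(\mathbb{Z}_\ell)$ with an automorphism of $\varinjlim_n(\mathbb{Z}/\ell^n\mathbb{Z})^2$; $\mathcal{M}_{a,b}=\{M\in G:\ \ker(M-I)\cong\mathbb{Z}/\ell^a\mathbb{Z}\times\mathbb{Z}/\ell^{a+b}\mathbb{Z}\}$ and $\mu_{a,b}$ is its measure for the Haar measure of $G$ normalized to total mass $1$. *)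

theory Defs
  imports "HOL-Algebra.Elementary_Groups" "HOL-Probability.Probability"
begin

text \<open>A 2x2 integer matrix [[a,b],[c,d]] is stored as the quadruple (a,b,c,d).
  An element of M_2(Z_l) is stored as the compatible sequence of its reductions
  modulo l^n (entries normalised to {0..<l^n}).\<close>

type_synonym mat4 = "int \<times> int \<times> int \<times> int"
type_synonym ladic_mat = "nat \<Rightarrow> mat4"

definition mmod :: "int \<Rightarrow> mat4 \<Rightarrow> mat4" where
  "mmod m = (\<lambda>(a, b, c, d). (a mod m, b mod m, c mod m, d mod m))"

definition mmul :: "mat4 \<Rightarrow> mat4 \<Rightarrow> mat4" where
  "mmul = (\<lambda>(a, b, c, d) (e, f, g, h). (a*e + b*g, a*f + b*h, c*e + d*g, c*f + d*h))"

definition Zl :: "nat \<Rightarrow> (nat \<Rightarrow> int) set" where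
  "Zl l = {x. \<forall>n. x n = x (Suc n) mod (int l ^ n)}"

definition Zl_mats :: "nat \<Rightarrow> ladic_mat set" where
  "Zl_mats l = {M. \<forall>n. M n = mmod (int l ^ n) (M (Suc n))}"

definition lmult :: "nat \<Rightarrow> ladic_mat \<Rightarrow> ladic_mat \<Rightarrow> ladic_mat" where
  "lmult l M N = (\<lambda>n. mmod (int l ^ n) (mmul (M n) (N n)))"

definition lone :: "nat \<Rightarrow> ladic_mat" where
  "lone l = (\<lambda>n. mmod (int l ^ n) (1, 0, 0, 1))"

definition GL2 :: "nat \<Rightarrow> ladic_mat set" where
  "GL2 l = {M \<in> Zl_mats l. \<exists>N \<in> Zl_mats l. lmult l M N = lone l \<and> lmult l N M = lone l}"

text \<open>Matrix of left multiplication by x + y*w on the quadratic ring Z_l[w],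
  w^2 = t w - d, in the basis (1, w).\<close>
definition quad_elt ::
  "nat \<Rightarrow> (nat \<Rightarrow> int) \<Rightarrow> (nat \<Rightarrow> int) \<Rightarrow> (nat \<Rightarrow> int) \<Rightarrow> (nat \<Rightarrow> int) \<Rightarrow> ladic_mat" where
  "quad_elt l t d x y = (\<lambda>n. mmod (int l ^ n) (x n, - (d n * y n), y n, x n + t n * y n))"

text \<open>Cartan subgroup: unit group R^x of a quadratic ring R = Z_l[w] (w^2 = t w - d,
  reduced: t^2 - 4d \<noteq> 0 in Z_l) acting on R by left multiplication, written in an arbitrary
  Z_l-basis of R (change of basis P from the basis (1,w)).\<close>
definition cartan :: "nat \<Rightarrow> ladic_mat set \<Rightarrow> bool" where
  "cartan l C \<longleftrightarrow>
     (\<exists>t \<in> Zl l. \<exists>d \<in> Zl l. (\<exists>n. (t n ^ 2 - 4 * d n) mod (int l ^ n) \<noteq> 0) \<and>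
       (\<exists>P \<in> GL2 l. C = {M \<in> GL2 l. \<exists>x \<in> Zl l. \<exists>y \<in> Zl l.
                              lmult l P M = lmult l (quad_elt l t d x y) P}))"

definition is_subgroup :: "nat \<Rightarrow> ladic_mat set \<Rightarrow> ladic_mat set \<Rightarrow> bool" where
  "is_subgroup l G C \<longleftrightarrow> G \<subseteq> C \<and> lone l \<in> G \<and>
     (\<forall>M \<in> G. \<forall>N \<in> G. lmult l M N \<in> G) \<and>
     (\<forall>M \<in> G. \<exists>N \<in> G. lmult l M N = lone l \<and> lmult l N M = lone l)"

definition open_in_ladic :: "ladic_mat set \<Rightarrow> ladic_mat set \<Rightarrow> bool" where
  "open_in_ladic G C \<longleftrightarrow> (\<forall>M \<in> G. \<exists>n. \<forall>N \<in> C. N n = M n \<longrightarrow> N \<in> G)"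

definition red :: "ladic_mat set \<Rightarrow> nat \<Rightarrow> mat4 set" where
  "red X n = (\<lambda>M. M n) ` X"

definition ladic_index :: "nat \<Rightarrow> ladic_mat set \<Rightarrow> ladic_mat set \<Rightarrow> nat" where
  "ladic_index l C G = card {(\<lambda>N. lmult l M N) ` G | M. M \<in> C}"

definition level_index :: "nat \<Rightarrow> nat \<Rightarrow> ladic_mat set \<Rightarrow> ladic_mat set \<Rightarrow> nat" where
  "level_index l n C G =
     card {(\<lambda>B. mmod (int l ^ n) (mmul A B)) ` red G n | A. A \<in> red C n}"

definition level :: "nat \<Rightarrow> ladic_mat set \<Rightarrow> ladic_mat set \<Rightarrow> nat" where
  "level l C G = (LEAST n. 0 < n \<and> level_index l n C G = ladic_index l C G)"

text \<open>ker(M - I) on lim_n (Z/l^n Z)^2, identified with (Z[1/l]/Z)^2 (transition maps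
  multiplication by l; w at level k corresponds to w / l^k), elements represented by
  pairs of rationals in [0,1).\<close>
definition ker_set :: "nat \<Rightarrow> ladic_mat \<Rightarrow> (rat \<times> rat) set" where
  "ker_set l M = {(frac (of_int w1 / of_int (int l ^ k)), frac (of_int w2 / of_int (int l ^ k))) | k w1 w2.
      (case M k of (a, b, c, d) \<Rightarrow>
         ((a - 1) * w1 + b * w2) mod (int l ^ k) = 0 \<and> (c * w1 + (d - 1) * w2) mod (int l ^ k) = 0)}"

definition ker_group :: "nat \<Rightarrow> ladic_mat \<Rightarrow> (rat \<times> rat) monoid" where
  "ker_group l M = \<lparr>carrier = ker_set l M,
                     monoid.mult = (\<lambda>(x, y) (x', y'). (frac (x + x'), frac (y + y'))),
                     one = (0, 0)\<rparr>"

definition Mab :: "nat \<Rightarrow> ladic_mat set \<Rightarrow> nat \<Rightarrow> nat \<Rightarrow> ladic_mat set" where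
  "Mab l G a b = {M \<in> G. ker_group l M \<cong> (integer_mod_group (l ^ a) \<times>\<times> integer_mod_group (l ^ (a + b)))}"

text \<open>Haar probability measure on G: a left-invariant probability measure on the Borel
  sigma-algebra of G (generated by the basic open sets {M in G. M n = A}).\<close>
definition haar_prob :: "nat \<Rightarrow> ladic_mat set \<Rightarrow> ladic_mat measure \<Rightarrow> bool" where
  "haar_prob l G \<mu> \<longleftrightarrow> space \<mu> = G \<and>
     sets \<mu> = sigma_sets G {{M \<in> G. M n = A} | n A. True} \<and>
     prob_space \<mu> \<and>
     (\<forall>g \<in> G. \<forall>A \<in> sets \<mu>. emeasure \<mu> ((\<lambda>M. lmult l g M) ` A) = emeasure \<mu> A)"

end

(*
  The kernel of M - I on (Q_l/Z_l)^2 consists of the points w / l^k with (M - I) w = 0 mod l^k.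
  For a >= 1 the condition M in M_{a,b} forces M = I mod l^a and, since ker(M - I) then lies in
  the l^(a+b)-torsion, depends only on M mod l^(a+b+1).  So M_{a,b} is a union of fibres of
  G -> G(a+b+1), and left invariance of the Haar measure gives
  mu_{a,b} = |M_{a,b}(a+b+1)| / |G(a+b+1)|.

  The lift M |-> I + l (M - I) satisfies ker(lift M - I) = l^-1 ker(M - I), which turns a
  basis of type (l^a, l^(a+b)) into one of type (l^(a+1), l^(a+b+1)).  It preserves the Cartan
  subgroup C, and for a >= n0 its image lies in the kernel of C -> C(n0), which is contained
  in G.  Hence it is a bijection M_{a,b} -> M_{a+1,b} that is injective on residues, so
  |M_{a+1,b}(a+b+2)| = |M_{a,b}(a+b+1)|.  On the other hand |G(n+1)| = l^2 |G(n)| for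
  n >= n0, because the kernel of C(n+1) -> C(n) consists of the l^2 classes of
  1 + l^n (x + y w).  Thus mu_{a+1,b} = mu_{a,b} / l^2, and induction on a gives the claim.
*)

theory Submission
  imports Defs "HOL-Number_Theory.Number_Theory"
begin

lemma mmod_simp: "mmod m (a, b, c, d) = (a mod m, b mod m, c mod m, d mod m)"
  by (simp add: mmod_def)

lemma mmul_simp: "mmul (a, b, c, d) (e, f, g, h) = (a*e + b*g, a*f + b*h, c*e + d*g, c*f + d*h)"
  by (simp add: mmul_def)

lemma mmod_eq_iff:
  "mmod m (a, b, c, d) = mmod m (a', b', c', d') \<longleftrightarrow>
     [a = a'] (mod m) \<and> [b = b'] (mod m) \<and> [c = c'] (mod m) \<and> [d = d'] (mod m)"
  by (simp add: mmod_simp cong_def)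

lemma mmod_mmod [simp]: "mmod m (mmod m A) = mmod m A"
  by (cases A) (simp add: mmod_simp)

lemma mmod_dvd: "k dvd m \<Longrightarrow> mmod k (mmod m A) = mmod k A"
  by (cases A) (simp add: mmod_simp mod_mod_cancel)

lemma mmod_range: "m > 0 \<Longrightarrow> mmod m A \<in> {0..<m} \<times> {0..<m} \<times> {0..<m} \<times> {0..<m}"
  by (cases A) (simp add: mmod_simp)

lemma mmul_assoc: "mmul (mmul A B) D = mmul A (mmul B D)"
  by (cases A; cases B; cases D) (simp add: mmul_simp algebra_simps)

lemma mmul_one_left [simp]: "mmul (1, 0, 0, 1) A = A"
  by (cases A) (simp add: mmul_simp)

lemma mmul_one_right [simp]: "mmul A (1, 0, 0, 1) = A"
  by (cases A) (simp add: mmul_simp)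

lemma mmod_mmul_left: "mmod m (mmul (mmod m A) B) = mmod m (mmul A B)"
proof -
  have "((a::int) mod m * b + c mod m * d) mod m = (a*b + c*d) mod m" for a b c d
    by (metis mod_add_cong mod_mult_left_eq)
  then show ?thesis by (cases A; cases B) (simp add: mmul_simp mmod_simp)
qed

lemma mmod_mmul_right: "mmod m (mmul A (mmod m B)) = mmod m (mmul A B)"
proof -
  have "((a::int) * (b mod m) + c * (d mod m)) mod m = (a*b + c*d) mod m" for a b c d
    by (metis mod_add_cong mod_mult_right_eq)
  then show ?thesis by (cases A; cases B) (simp add: mmul_simp mmod_simp)
qed

lemma mmod_mmul_mid: "mmod m (mmul (mmul A (mmod m B)) D) = mmod m (mmul (mmul A B) D)"
  by (metis mmod_mmul_left mmod_mmul_right)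

definition det4 :: "mat4 \<Rightarrow> int" where
  "det4 = (\<lambda>(a, b, c, d). a*d - b*c)"

definition adj4 :: "mat4 \<Rightarrow> mat4" where
  "adj4 = (\<lambda>(a, b, c, d). (d, -b, -c, a))"

definition msc :: "int \<Rightarrow> mat4 \<Rightarrow> mat4" where
  "msc k = (\<lambda>(a, b, c, d). (k*a, k*b, k*c, k*d))"

definition madd :: "mat4 \<Rightarrow> mat4 \<Rightarrow> mat4" where
  "madd = (\<lambda>(a, b, c, d) (e, f, g, h). (a+e, b+f, c+g, d+h))"

lemma msc_simp: "msc k (a, b, c, d) = (k*a, k*b, k*c, k*d)"
  by (simp add: msc_def)

lemma madd_simp: "madd (a, b, c, d) (e, f, g, h) = (a+e, b+f, c+g, d+h)"
  by (simp add: madd_def)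

lemma det4_cong_mmod: "mmod m A = mmod m B \<Longrightarrow> [det4 A = det4 B] (mod m)"
  by (cases A; cases B) (simp add: det4_def mmod_eq_iff cong_diff cong_mult)

lemma mmul_msc_adj4: "mmul A (msc u (adj4 A)) = (u * det4 A, 0, 0, u * det4 A)"
  by (cases A) (simp add: mmul_simp adj4_def det4_def msc_def algebra_simps)

lemma mmul_msc_adj4': "mmul (msc u (adj4 A)) A = (u * det4 A, 0, 0, u * det4 A)"
  by (cases A) (simp add: mmul_simp adj4_def det4_def msc_def algebra_simps)

lemma mmod_msc_adj4_cong:
  assumes "[u = u'] (mod m)" "mmod m A = mmod m B"
  shows "mmod m (msc u (adj4 A)) = mmod m (msc u' (adj4 B))"
proof (cases A; cases B)
  fix a b c d a' b' c' d' assume A: "A = (a, b, c, d)" and B: "B = (a', b', c', d')"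
  from assms(2) have "[a = a'] (mod m)" "[b = b'] (mod m)" "[c = c'] (mod m)" "[d = d'] (mod m)"
    unfolding A B mmod_eq_iff by auto
  with assms(1) show ?thesis
    unfolding A B msc_def adj4_def by (simp add: mmod_eq_iff cong_minus_minus_iff cong_mult)
qed

lemma mmod_lin_cong:
  assumes "mmod m A = mmod m A'" "mmod m B = mmod m B'"
  shows "mmod m (madd (msc u A) (msc v B)) = mmod m (madd (msc u A') (msc v B'))"
proof (cases A; cases A'; cases B; cases B')
  fix a1 a2 a3 a4 b1 b2 b3 b4 c1 c2 c3 c4 d1 d2 d3 d4
  assume h: "A = (a1, a2, a3, a4)" "A' = (b1, b2, b3, b4)" "B = (c1, c2, c3, c4)" "B' = (d1, d2, d3, d4)"
  from assms have "[a1 = b1] (mod m)" "[a2 = b2] (mod m)" "[a3 = b3] (mod m)" "[a4 = b4] (mod m)"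
    "[c1 = d1] (mod m)" "[c2 = d2] (mod m)" "[c3 = d3] (mod m)" "[c4 = d4] (mod m)"
    unfolding h mmod_eq_iff by auto
  then show ?thesis unfolding h msc_simp madd_simp mmod_eq_iff
    by (intro conjI cong_add cong_scalar_left) auto
qed

lemma Zl_matsD: "M \<in> Zl_mats l \<Longrightarrow> M n = mmod (int l ^ n) (M (Suc n))"
  unfolding Zl_mats_def by blast

lemma Zl_mats_mmod: "M \<in> Zl_mats l \<Longrightarrow> mmod (int l ^ n) (M n) = M n"
  by (metis Zl_matsD mmod_mmod)

lemma Zl_mats_le:
  assumes "M \<in> Zl_mats l" "n \<le> k"
  shows "M n = mmod (int l ^ n) (M k)"
  using assms(2)
proof (induction k rule: dec_induct)
  case base
  then show ?case using Zl_mats_mmod[OF assms(1)] by simp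
next
  case (step k)
  have "M n = mmod (int l ^ n) (mmod (int l ^ k) (M (Suc k)))"
    using step Zl_matsD[OF assms(1), of k] by simp
  also have "\<dots> = mmod (int l ^ n) (M (Suc k))"
    by (rule mmod_dvd) (simp add: le_imp_power_dvd step)
  finally show ?case .
qed

lemma lmult_closed:
  assumes "M \<in> Zl_mats l" "N \<in> Zl_mats l"
  shows "lmult l M N \<in> Zl_mats l"
  unfolding Zl_mats_def lmult_def
proof (intro CollectI allI)
  fix n
  have "mmod (int l ^ n) (mmul (M n) (N n)) = mmod (int l ^ n) (mmul (M (Suc n)) (N (Suc n)))"
    using Zl_matsD[OF assms(1), of n] Zl_matsD[OF assms(2), of n]
    by (simp add: mmod_mmul_left mmod_mmul_right)
  also have "\<dots> = mmod (int l ^ n) (mmod (int l ^ Suc n) (mmul (M (Suc n)) (N (Suc n))))"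
    by (rule mmod_dvd[symmetric]) simp
  finally show "mmod (int l ^ n) (mmul (M n) (N n)) =
      mmod (int l ^ n) (mmod (int l ^ Suc n) (mmul (M (Suc n)) (N (Suc n))))" .
qed

lemma lone_closed: "lone l \<in> Zl_mats l"
  unfolding Zl_mats_def lone_def by (auto intro: mmod_dvd[symmetric])

lemma lmult_assoc: "lmult l (lmult l M N) K = lmult l M (lmult l N K)"
  unfolding lmult_def by (simp add: mmod_mmul_left mmod_mmul_right mmul_assoc)

lemma lone_left: "M \<in> Zl_mats l \<Longrightarrow> lmult l (lone l) M = M"
  unfolding lmult_def lone_def by (simp add: mmod_mmul_left Zl_mats_mmod)

lemma lone_right: "M \<in> Zl_mats l \<Longrightarrow> lmult l M (lone l) = M"
  unfolding lmult_def lone_def by (simp add: mmod_mmul_right Zl_mats_mmod)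

lemma lmult_level: "lmult l M N n = mmod (int l ^ n) (mmul (M n) (N n))"
  by (simp add: lmult_def)

lemma lmult3_level: "lmult l (lmult l A B) D n = mmod (int l ^ n) (mmul (mmul (A n) (B n)) (D n))"
  unfolding lmult_def by (simp add: mmod_mmul_left)

definition mat_monoid :: "nat \<Rightarrow> ladic_mat monoid" where
  "mat_monoid l = \<lparr>carrier = Zl_mats l, monoid.mult = lmult l, one = lone l\<rparr>"

lemma mat_monoid_simps [simp]:
  "carrier (mat_monoid l) = Zl_mats l" "monoid.mult (mat_monoid l) = lmult l" "one (mat_monoid l) = lone l"
  by (simp_all add: mat_monoid_def)

lemma monoid_mat_monoid: "monoid (mat_monoid l)"
  by (rule monoidI) (simp_all add: lmult_closed lone_closed lmult_assoc lone_left lone_right)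

lemma GL2_Units: "GL2 l = Units (mat_monoid l)"
  unfolding GL2_def Units_def mat_monoid_simps by blast

lemma GL2_Zl_mats: "M \<in> GL2 l \<Longrightarrow> M \<in> Zl_mats l"
  unfolding GL2_def by blast

lemma GL2_inv:
  assumes "M \<in> GL2 l"
  obtains N where "N \<in> GL2 l" "lmult l M N = lone l" "lmult l N M = lone l"
proof -
  interpret monoid "mat_monoid l" by (rule monoid_mat_monoid)
  have "M \<in> Units (mat_monoid l)" using assms by (simp add: GL2_Units)
  then show ?thesis
    using that[of "inv\<^bsub>mat_monoid l\<^esub> M"] Units_inv_Units Units_r_inv Units_l_inv
    by (simp add: GL2_Units)
qed

lemma GL2_mult: "M \<in> GL2 l \<Longrightarrow> N \<in> GL2 l \<Longrightarrow> lmult l M N \<in> GL2 l"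
  using monoid.Units_m_closed[OF monoid_mat_monoid] by (simp add: GL2_Units)

lemma lone_GL2: "lone l \<in> GL2 l"
  unfolding GL2_def using lone_closed lone_left[OF lone_closed] by blast

lemma det4_coprime_all_levels:
  assumes M: "M \<in> Zl_mats l" and unit: "coprime (det4 (M 1)) (int l)"
  shows "coprime (det4 (M n)) (int l ^ n)"
proof (cases "n = 0")
  case False
  then have "M 1 = mmod (int l) (M n)" using Zl_mats_le[OF M, of 1 n] by simp
  then have "[det4 (M 1) = det4 (M n)] (mod int l)"
    using det4_cong_mmod[of "int l" "M n" "M 1"] by (simp add: cong_sym)
  then show ?thesis using unit by (metis cong_imp_coprime coprime_power_right_iff)
qed simp

text \<open>Level by level the inverse is \<open>u\<^sub>n adj(M\<^sub>n)\<close>, with \<open>u\<^sub>n\<close> an inverse of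
  \<open>det M\<^sub>n\<close> modulo \<open>l^n\<close>; since such inverses are unique modulo \<open>l^n\<close>, the levels are compatible.\<close>

lemma GL2_of_coprime_det:
  assumes M: "M \<in> Zl_mats l" and unit: "coprime (det4 (M 1)) (int l)"
  shows "M \<in> GL2 l"
proof -
  note cop = det4_coprime_all_levels[OF M unit]
  define u where "u n = (SOME v. [det4 (M n) * v = 1] (mod int l ^ n))" for n
  have u: "[det4 (M n) * u n = 1] (mod int l ^ n)" for n
    unfolding u_def by (rule someI_ex) (rule cong_solve_coprime_int[OF cop])
  have u_compat: "[u (Suc n) = u n] (mod int l ^ n)" for n
  proof -
    have "[det4 (M (Suc n)) * u (Suc n) = 1] (mod int l ^ n)"
      using u[of "Suc n"] by (rule cong_dvd_modulus) simp
    moreover have "[det4 (M (Suc n)) = det4 (M n)] (mod int l ^ n)"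
      using det4_cong_mmod[of "int l ^ n" "M (Suc n)" "M n"] Zl_matsD[OF M, of n] by simp
    ultimately have "[det4 (M n) * u (Suc n) = det4 (M n) * u n] (mod int l ^ n)"
      using u[of n] by (metis cong_scalar_right cong_sym cong_trans)
    then show ?thesis using cop[of n] cong_mult_lcancel by blast
  qed
  define N where "N n = mmod (int l ^ n) (msc (u n) (adj4 (M n)))" for n
  have "N \<in> Zl_mats l"
    unfolding Zl_mats_def
  proof (intro CollectI allI)
    fix n
    have "mmod (int l ^ n) (N (Suc n)) = mmod (int l ^ n) (msc (u (Suc n)) (adj4 (M (Suc n))))"
      unfolding N_def by (rule mmod_dvd) simp
    also have "\<dots> = N n"
      unfolding N_def by (rule mmod_msc_adj4_cong[OF u_compat]) (simp add: Zl_matsD[OF M, of n])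
    finally show "N n = mmod (int l ^ n) (N (Suc n))" ..
  qed
  moreover have "lmult l M N = lone l"
  proof
    fix n
    show "lmult l M N n = lone l n"
      using u[of n] unfolding lmult_def N_def lone_def mmod_mmul_right mmul_msc_adj4 mmod_eq_iff
      by (simp add: mult.commute)
  qed
  moreover have "lmult l N M = lone l"
  proof
    fix n
    show "lmult l N M n = lone l n"
      using u[of n] unfolding lmult_def N_def lone_def mmod_mmul_left mmul_msc_adj4' mmod_eq_iff
      by (simp add: mult.commute)
  qed
  ultimately show ?thesis unfolding GL2_def using M by blast
qed

lemma monoid_inv_commute:
  fixes G (structure)
  assumes "monoid G" "x \<in> carrier G" "y \<in> carrier G" "w \<in> carrier G"
    "x \<otimes> y = \<one>" "y \<otimes> x = \<one>" "x \<otimes> w = w \<otimes> x"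
  shows "y \<otimes> w = w \<otimes> y"
proof -
  interpret monoid G by fact
  have "y \<otimes> w = y \<otimes> w \<otimes> (x \<otimes> y)" using assms(2-5) by simp
  also have "\<dots> = y \<otimes> (w \<otimes> x) \<otimes> y" using assms(2-4) by (simp add: m_assoc)
  also have "\<dots> = y \<otimes> (x \<otimes> w) \<otimes> y" using assms(7) by simp
  also have "\<dots> = (y \<otimes> x) \<otimes> w \<otimes> y" using assms(2-4) by (simp add: m_assoc)
  also have "\<dots> = w \<otimes> y" using assms(2-4,6) by simp
  finally show ?thesis .
qed

definition zseq :: "nat \<Rightarrow> int \<Rightarrow> nat \<Rightarrow> int" where
  "zseq l c = (\<lambda>n. c mod (int l ^ n))"

lemma zseq_Zl: "zseq l c \<in> Zl l"
  unfolding Zl_def zseq_def by (simp add: mod_mod_cancel)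

lemma Zl_cong:
  assumes "x \<in> Zl l"
  shows "[x (Suc n) = x n] (mod (int l ^ n))"
proof -
  have "x n = x (Suc n) mod (int l ^ n)" using assms unfolding Zl_def by blast
  then show ?thesis by (simp add: cong_def)
qed

lemma quad_elt_Zl_mats:
  assumes "t \<in> Zl l" "d \<in> Zl l" "x \<in> Zl l" "y \<in> Zl l"
  shows "quad_elt l t d x y \<in> Zl_mats l"
  unfolding Zl_mats_def
proof (intro CollectI allI)
  fix n
  note c = Zl_cong[OF assms(1), of n] Zl_cong[OF assms(2), of n] Zl_cong[OF assms(3), of n]
    Zl_cong[OF assms(4), of n]
  have "mmod (int l ^ n) (quad_elt l t d x y (Suc n)) =
        mmod (int l ^ n) (x (Suc n), - (d (Suc n) * y (Suc n)), y (Suc n), x (Suc n) + t (Suc n) * y (Suc n))"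
    unfolding quad_elt_def by (rule mmod_dvd) simp
  also have "\<dots> = quad_elt l t d x y n"
    unfolding quad_elt_def mmod_eq_iff using c by (auto intro!: cong_add cong_mult simp: cong_minus_minus_iff)
  finally show "quad_elt l t d x y n = mmod (int l ^ n) (quad_elt l t d x y (Suc n))" ..
qed

lemma Zl_mats_entries_Zl:
  assumes "X \<in> Zl_mats l"
  shows "(\<lambda>n. fst (X n)) \<in> Zl l" "(\<lambda>n. fst (snd (snd (X n)))) \<in> Zl l"
proof -
  have "fst (X n) = fst (X (Suc n)) mod int l ^ n \<and>
        fst (snd (snd (X n))) = fst (snd (snd (X (Suc n)))) mod int l ^ n" for n
    using Zl_matsD[OF assms, of n] by (cases "X (Suc n)") (simp add: mmod_simp)
  then show "(\<lambda>n. fst (X n)) \<in> Zl l" "(\<lambda>n. fst (snd (snd (X n)))) \<in> Zl l"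
    unfolding Zl_def by blast+
qed

lemma dvd_small_int:
  fixes x m :: int
  assumes "m dvd x" "-m < x" "x < m"
  shows "x = 0"
proof (rule ccontr)
  assume x: "x \<noteq> 0"
  have "m dvd \<bar>x\<bar>" using assms(1) by simp
  then have "m \<le> \<bar>x\<bar>" using x by (intro zdvd_imp_le) auto
  then show False using assms(2,3) by linarith
qed

lemma mod_double_eq_self:
  fixes x m :: int
  assumes "0 \<le> x" "x < m" "(x + x) mod m = x"
  shows "x = 0"
proof -
  have "[x + x = x] (mod m)" using assms by (simp add: cong_def)
  then have "m dvd x" by (simp add: cong_iff_dvd_diff)
  then show ?thesis using dvd_small_int assms by simp
qed

lemma inj_on_mmul_level:
  assumes M: "M \<in> GL2 l" and X: "X \<subseteq> Zl_mats l"
  shows "inj_on (\<lambda>E. mmod (int l ^ k) (mmul (M k) E)) (red X k)"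
proof
  obtain N where N: "N \<in> GL2 l" "lmult l N M = lone l" using GL2_inv[OF M] by metis
  fix E E' assume E: "E \<in> red X k" and E': "E' \<in> red X k"
    and eq: "mmod (int l ^ k) (mmul (M k) E) = mmod (int l ^ k) (mmul (M k) E')"
  have "mmod (int l ^ k) (mmul (N k) (mmod (int l ^ k) (mmul (M k) F))) = F" if "F \<in> red X k" for F
  proof -
    have "mmod (int l ^ k) F = F" using that X Zl_mats_mmod unfolding red_def by blast
    moreover have "mmod (int l ^ k) (mmul (N k) (M k)) = mmod (int l ^ k) (1, 0, 0, 1)"
      using fun_cong[OF N(2), of k] unfolding lmult_level lone_def .
    ultimately show ?thesis by (metis mmod_mmul_left mmod_mmul_right mmul_assoc mmul_one_left)
  qed
  from this[OF E] this[OF E'] eq show "E = E'" by metis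
qed

lemma int_div_less_of_less_mult:
  fixes x q m :: int
  assumes "m > 0" "x < q * m"
  shows "x div m < q"
  using assms by (smt (verit) minus_div_mult_eq_mod mult_right_less_imp_less pos_mod_sign)

locale ell_adic =
  fixes l :: nat
  assumes prime: "prime l"
begin

abbreviation "L \<equiv> int l"

lemma l_ge_2: "l \<ge> 2"
  using prime by (simp add: prime_ge_2_nat)

lemma L_pow_pos: "L ^ n > 0" using l_ge_2 by simp

lemma L_pow_gt_1: "a \<ge> 1 \<Longrightarrow> L^a > 1"
proof -
  assume "a \<ge> 1"
  then have "L^a \<ge> L" using l_ge_2 by (simp add: self_le_power)
  then show ?thesis using l_ge_2 by linarith
qed

lemma lone_level: "n > 0 \<Longrightarrow> lone l n = (1, 0, 0, 1)"
  using L_pow_gt_1[of n] unfolding lone_def by (simp add: mmod_simp)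

lemma level_one_of_le:
  assumes N: "N \<in> Zl_mats l" and Nn: "N n = lone l n" and m: "0 < m" "m \<le> n"
  shows "N m = (1, 0, 0, 1)"
  using Zl_mats_le[OF N m(2)] Nn Zl_mats_le[OF lone_closed m(2)] lone_level[OF m(1)] by simp

lemma Zl_mats_range: "M \<in> Zl_mats l \<Longrightarrow> M n \<in> {0..<L^n} \<times> {0..<L^n} \<times> {0..<L^n} \<times> {0..<L^n}"
  using Zl_mats_mmod[of M l n] mmod_range[OF L_pow_pos, of n "M n"] by simp

lemma red_finite: "X \<subseteq> Zl_mats l \<Longrightarrow> finite (red X n)"
proof -
  assume X: "X \<subseteq> Zl_mats l"
  have "red X n \<subseteq> {0..<L^n} \<times> {0..<L^n} \<times> {0..<L^n} \<times> {0..<L^n}"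
    unfolding red_def using X Zl_mats_range by blast
  then show ?thesis by (rule finite_subset) simp
qed

definition tor_pt :: "nat \<Rightarrow> int \<Rightarrow> int \<Rightarrow> rat \<times> rat" where
  "tor_pt k w1 w2 = (frac (of_int w1 / of_int (L ^ k)), frac (of_int w2 / of_int (L ^ k)))"

definition tor_add :: "rat \<times> rat \<Rightarrow> rat \<times> rat \<Rightarrow> rat \<times> rat" where
  "tor_add = (\<lambda>(x, y) (x', y'). (frac (x + x'), frac (y + y')))"

lemma frac_div_pow_eq_iff:
  "frac (of_int x / of_int (L^k) :: rat) = frac (of_int y / of_int (L^k)) \<longleftrightarrow> [x = y] (mod L^k)"
proof -
  have "(of_int x / of_int (L^k) :: rat) - of_int y / of_int (L^k) = of_int (x - y) / of_int (L^k)"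
    by (simp add: diff_divide_distrib)
  then show ?thesis
    using frac_diff_eq frac_diff_zero of_int_div_of_int_in_Ints_iff[of "x - y" "L^k", where 'a = rat]
    by (metis cong_iff_dvd_diff cong_sym frac_eq_0_iff L_pow_pos less_irrefl)
qed

lemma tor_pt_eq_iff: "tor_pt k x1 x2 = tor_pt k y1 y2 \<longleftrightarrow> [x1 = y1] (mod L^k) \<and> [x2 = y2] (mod L^k)"
  unfolding tor_pt_def using frac_div_pow_eq_iff by simp

lemma div_pow_shift: "(of_int x / of_int (L^k) :: rat) = of_int (L^j * x) / of_int (L^(k+j))"
  using L_pow_pos[of j] L_pow_pos[of k] by (simp add: power_add field_simps)

lemma tor_pt_shift: "tor_pt k x1 x2 = tor_pt (k+j) (L^j * x1) (L^j * x2)"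
  unfolding tor_pt_def by (simp only: div_pow_shift[of x1 k j] div_pow_shift[of x2 k j])

lemma tor_pt_shift_le: "k \<le> m \<Longrightarrow> tor_pt k x1 x2 = tor_pt m (L^(m-k) * x1) (L^(m-k) * x2)"
  using tor_pt_shift[of k x1 x2 "m-k"] by simp

lemma tor_pt_add: "tor_add (tor_pt k x1 x2) (tor_pt k y1 y2) = tor_pt k (x1 + y1) (x2 + y2)"
  unfolding tor_pt_def tor_add_def by (simp add: add_divide_distrib)

lemma tor_pt_zero: "tor_pt k 0 0 = (0,0)" unfolding tor_pt_def by simp

lemma tor_pt_level_0: "tor_pt 0 x y = (0,0)" unfolding tor_pt_def by simp

definition fixed_mod :: "mat4 \<Rightarrow> nat \<Rightarrow> int \<Rightarrow> int \<Rightarrow> bool" where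
  "fixed_mod A k w1 w2 = (case A of (a, b, c, e) \<Rightarrow>
         ((a - 1) * w1 + b * w2) mod (L ^ k) = 0 \<and> (c * w1 + (e - 1) * w2) mod (L ^ k) = 0)"

lemma ker_set_eq: "ker_set l M = {tor_pt k w1 w2 | k w1 w2. fixed_mod (M k) k w1 w2}"
  unfolding ker_set_def tor_pt_def fixed_mod_def ..

lemma fixed_mod_simp:
  "fixed_mod (a, b, c, e) k w1 w2 \<longleftrightarrow>
     [(a - 1) * w1 + b * w2 = 0] (mod L^k) \<and> [c * w1 + (e - 1) * w2 = 0] (mod L^k)"
  unfolding fixed_mod_def cong_def by simp

lemma fixed_mod_mmod: "fixed_mod (mmod (L^k) A) k w1 w2 \<longleftrightarrow> fixed_mod A k w1 w2"
proof (cases A)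
  case (fields a b c e)
  have h: "[x mod m = x] (mod m)" for x m :: int by (simp add: cong_def)
  have "[(a mod L^k - 1) * w1 + b mod L^k * w2 = (a - 1) * w1 + b * w2] (mod L^k)"
    using h by (intro cong_add cong_mult cong_diff cong_refl) auto
  moreover have "[c mod L^k * w1 + (e mod L^k - 1) * w2 = c * w1 + (e - 1) * w2] (mod L^k)"
    using h by (intro cong_add cong_mult cong_diff cong_refl) auto
  ultimately show ?thesis unfolding fields mmod_simp fixed_mod_simp
    by (meson cong_sym cong_trans)
qed

lemma fixed_mod_cong:
  assumes "[w1 = v1] (mod L^k)" "[w2 = v2] (mod L^k)"
  shows "fixed_mod A k w1 w2 \<longleftrightarrow> fixed_mod A k v1 v2"
proof (cases A)
  case (fields a b c e)
  have "[(a - 1) * w1 + b * w2 = (a - 1) * v1 + b * v2] (mod L^k)"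
    using assms by (intro cong_add cong_mult cong_refl) auto
  moreover have "[c * w1 + (e - 1) * w2 = c * v1 + (e - 1) * v2] (mod L^k)"
    using assms by (intro cong_add cong_mult cong_refl) auto
  ultimately show ?thesis unfolding fields fixed_mod_simp by (meson cong_sym cong_trans)
qed

lemma fixed_mod_scale_pow: "fixed_mod A (k+j) (L^j * w1) (L^j * w2) \<longleftrightarrow> fixed_mod A k w1 w2"
proof (cases A)
  case (fields a b c e)
  have p: "L^j > 0" using L_pow_pos by simp
  have e1: "(a - 1) * (L^j * w1) + b * (L^j * w2) = L^j * ((a - 1) * w1 + b * w2)" by (simp add: algebra_simps)
  have e2: "c * (L^j * w1) + (e - 1) * (L^j * w2) = L^j * (c * w1 + (e - 1) * w2)" by (simp add: algebra_simps)
  have d: "[L^j * x = 0] (mod L^(k+j)) \<longleftrightarrow> [x = 0] (mod L^k)" for x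
    using p l_ge_2 by (simp add: cong_0_iff power_add mult.commute)
  show ?thesis unfolding fields fixed_mod_simp e1 e2 d ..
qed

lemma fixed_mod_level_shift:
  assumes M: "M \<in> Zl_mats l"
  shows "fixed_mod (M (k+j)) (k+j) (L^j * w1) (L^j * w2) \<longleftrightarrow> fixed_mod (M k) k w1 w2"
proof -
  have "M k = mmod (L^k) (M (k+j))" using Zl_mats_le[OF M, of k "k+j"] by simp
  then have "fixed_mod (M k) k w1 w2 = fixed_mod (M (k+j)) k w1 w2" using fixed_mod_mmod by simp
  then show ?thesis using fixed_mod_scale_pow by simp
qed

lemma tor_pt_in_ker_set_iff:
  assumes M: "M \<in> Zl_mats l"
  shows "tor_pt k w1 w2 \<in> ker_set l M \<longleftrightarrow> fixed_mod (M k) k w1 w2"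
proof
  assume "tor_pt k w1 w2 \<in> ker_set l M"
  then obtain k' x1 x2 where e: "tor_pt k w1 w2 = tor_pt k' x1 x2" and c: "fixed_mod (M k') k' x1 x2"
    unfolding ker_set_eq by blast
  show "fixed_mod (M k) k w1 w2"
  proof (cases "k \<le> k'")
    case True
    then obtain j where j: "k' = k + j" using le_Suc_ex by blast
    have "tor_pt k' (L^j * w1) (L^j * w2) = tor_pt k' x1 x2" using e tor_pt_shift[of k w1 w2 j] j by simp
    then have "fixed_mod (M k') k' (L^j * w1) (L^j * w2)" using c fixed_mod_cong unfolding tor_pt_eq_iff by blast
    then show ?thesis using fixed_mod_level_shift[OF M] j by simp
  next
    case False
    then obtain j where j: "k = k' + j" by (metis le_Suc_ex nat_le_linear)
    have "fixed_mod (M k) k (L^j * x1) (L^j * x2)" using c fixed_mod_level_shift[OF M] j by simp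
    moreover have "tor_pt k w1 w2 = tor_pt k (L^j * x1) (L^j * x2)" using e tor_pt_shift[of k' x1 x2 j] j by simp
    ultimately show ?thesis using fixed_mod_cong unfolding tor_pt_eq_iff by blast
  qed
next
  assume "fixed_mod (M k) k w1 w2"
  then show "tor_pt k w1 w2 \<in> ker_set l M" unfolding ker_set_eq by blast
qed

lemma ker_set_tor_pt: "v \<in> ker_set l M \<Longrightarrow> \<exists>k w1 w2. v = tor_pt k w1 w2"
  unfolding ker_set_eq by blast

lemma ker_set_tor_pt_ge:
  assumes "v \<in> ker_set l M" obtains k w1 w2 where "v = tor_pt k w1 w2" "k \<ge> m"
proof -
  obtain k w1 w2 where v: "v = tor_pt k w1 w2" using ker_set_tor_pt[OF assms] by blast
  have "v = tor_pt (k + m) (L^m * w1) (L^m * w2)" using v tor_pt_shift by simp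
  then show ?thesis using that[of "k+m"] by simp
qed

lemma ker_set_tor_add:
  assumes M: "M \<in> Zl_mats l" and v: "v \<in> ker_set l M" and v': "v' \<in> ker_set l M"
  shows "tor_add v v' \<in> ker_set l M"
proof -
  obtain k w1 w2 where a: "v = tor_pt k w1 w2" using ker_set_tor_pt[OF v] by blast
  obtain k' x1 x2 where b: "v' = tor_pt k' x1 x2" using ker_set_tor_pt[OF v'] by blast
  have a': "v = tor_pt (k + k') (L^k' * w1) (L^k' * w2)" using a tor_pt_shift by simp
  have b': "v' = tor_pt (k + k') (L^k * x1) (L^k * x2)" using b tor_pt_shift[of k' x1 x2 k] by (simp add: add.commute)
  have c1: "fixed_mod (M (k+k')) (k+k') (L^k' * w1) (L^k' * w2)" using v a' tor_pt_in_ker_set_iff[OF M] by simp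
  have c2: "fixed_mod (M (k+k')) (k+k') (L^k * x1) (L^k * x2)" using v' b' tor_pt_in_ker_set_iff[OF M] by simp
  have "fixed_mod (M (k+k')) (k+k') (L^k' * w1 + L^k * x1) (L^k' * w2 + L^k * x2)"
  proof (cases "M (k+k')")
    case (fields a b c e)
    have s1: "(a - 1) * (L^k' * w1 + L^k * x1) + b * (L^k' * w2 + L^k * x2) =
       ((a - 1) * (L^k' * w1) + b * (L^k' * w2)) + ((a - 1) * (L^k * x1) + b * (L^k * x2))" by (simp add: algebra_simps)
    have s2: "c * (L^k' * w1 + L^k * x1) + (e - 1) * (L^k' * w2 + L^k * x2) =
       (c * (L^k' * w1) + (e - 1) * (L^k' * w2)) + (c * (L^k * x1) + (e - 1) * (L^k * x2))" by (simp add: algebra_simps)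
    show ?thesis using c1 c2 unfolding fields fixed_mod_simp s1 s2 using cong_add[of _ 0 _ _ 0] by fastforce
  qed
  then show ?thesis unfolding a' b' tor_pt_add using tor_pt_in_ker_set_iff[OF M] by simp
qed

lemma zero_in_ker_set: "(0,0) \<in> ker_set l M"
proof -
  have "fixed_mod (M 0) 0 0 0" unfolding fixed_mod_def by (cases "M 0") simp
  then have "tor_pt 0 0 0 \<in> ker_set l M" unfolding ker_set_eq by blast
  then show ?thesis using tor_pt_level_0 by simp
qed

definition cyc2 :: "nat \<Rightarrow> nat \<Rightarrow> (int \<times> int) monoid" where
  "cyc2 a c = integer_mod_group (l^a) \<times>\<times> integer_mod_group (l^c)"

lemma carrier_cyc2: "carrier (cyc2 a c) = {0..<L^a} \<times> {0..<L^c}"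
proof -
  have "l ^ a \<noteq> 0" "l ^ c \<noteq> 0" using l_ge_2 by auto
  then show ?thesis unfolding cyc2_def carrier_DirProd carrier_integer_mod_group using l_ge_2 by simp
qed

lemma cyc2_mult: "(i, j) \<otimes>\<^bsub>cyc2 a c\<^esub> (i', j') = ((i + i') mod L^a, (j + j') mod L^c)"
  unfolding cyc2_def by simp

lemma group_cyc2: "group (cyc2 a c)"
  unfolding cyc2_def by (intro DirProd_group group_integer_mod_group)

lemma carrier_ker_group: "carrier (ker_group l M) = ker_set l M" by (simp add: ker_group_def)
lemma ker_group_mult: "x \<otimes>\<^bsub>ker_group l M\<^esub> y = tor_add x y" by (simp add: ker_group_def tor_add_def)

definition tor_comb :: "nat \<Rightarrow> int \<Rightarrow> int \<Rightarrow> int \<Rightarrow> int \<Rightarrow> int \<Rightarrow> int \<Rightarrow> rat \<times> rat" where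
  "tor_comb k U1 U2 V1 V2 i j = tor_pt k (i*U1 + j*V1) (i*U2 + j*V2)"

text \<open>The points \<open>u = tor_pt k U1 U2\<close> and \<open>v = tor_pt k V1 V2\<close> form a basis of \<open>A\<close> of type
  \<open>(l\<^sup>a, l\<^sup>c)\<close>, so \<open>A \<cong> Z/l\<^sup>a \<times> Z/l\<^sup>c\<close>.\<close>

definition ker_basis ::
  "nat \<Rightarrow> nat \<Rightarrow> nat \<Rightarrow> int \<Rightarrow> int \<Rightarrow> int \<Rightarrow> int \<Rightarrow> (rat \<times> rat) set \<Rightarrow> bool" where
  "ker_basis a c k U1 U2 V1 V2 A \<longleftrightarrow>
   [L^a * U1 = 0] (mod L^k) \<and> [L^a * U2 = 0] (mod L^k) \<and> [L^c * V1 = 0] (mod L^k) \<and> [L^c * V2 = 0] (mod L^k) \<and>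
   bij_betw (\<lambda>(i,j). tor_comb k U1 U2 V1 V2 i j) ({0..<L^a} \<times> {0..<L^c}) A"

lemma ker_basisD:
  assumes "ker_basis a c k U1 U2 V1 V2 A"
  shows "[L^a * U1 = 0] (mod L^k)" "[L^a * U2 = 0] (mod L^k)" "[L^c * V1 = 0] (mod L^k)" "[L^c * V2 = 0] (mod L^k)"
    and "bij_betw (\<lambda>(i, j). tor_comb k U1 U2 V1 V2 i j) ({0..<L^a} \<times> {0..<L^c}) A"
  using assms unfolding ker_basis_def by auto

lemma cong_mod_mult_of_cong_0:
  fixes m U q x :: int
  assumes "[m * U = 0] (mod q)"
  shows "[(x mod m) * U = x * U] (mod q)"
proof -
  have "(x mod m) * U = x * U - (x div m) * (m * U)" by (simp add: algebra_simps minus_div_mult_eq_mod[symmetric])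
  moreover have "[x * U - (x div m) * (m * U) = x * U - (x div m) * 0] (mod q)"
    using assms by (intro cong_diff cong_refl cong_mult) auto
  ultimately show ?thesis by simp
qed

lemma tor_comb_mod:
  assumes "[L^a * U1 = 0] (mod L^k)" "[L^a * U2 = 0] (mod L^k)" "[L^c * V1 = 0] (mod L^k)" "[L^c * V2 = 0] (mod L^k)"
  shows "tor_comb k U1 U2 V1 V2 (i mod L^a) (j mod L^c) = tor_comb k U1 U2 V1 V2 i j"
  unfolding tor_comb_def tor_pt_eq_iff using assms
  by (auto intro!: cong_add cong_mod_mult_of_cong_0)

lemma tor_comb_add: "tor_add (tor_comb k U1 U2 V1 V2 i j) (tor_comb k U1 U2 V1 V2 i' j') = tor_comb k U1 U2 V1 V2 (i + i') (j + j')"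
  unfolding tor_comb_def tor_pt_add by (simp add: algebra_simps)

lemma ker_basis_imp_iso:
  assumes "ker_basis a c k U1 U2 V1 V2 (ker_set l M)"
  shows "ker_group l M \<cong> cyc2 a c"
proof -
  define F where "F = (\<lambda>(i,j). tor_comb k U1 U2 V1 V2 i j)"
  note c = ker_basisD(1-4)[OF assms]
  have b: "bij_betw F ({0..<L^a} \<times> {0..<L^c}) (ker_set l M)" using ker_basisD(5)[OF assms] unfolding F_def .
  have "F \<in> hom (cyc2 a c) (ker_group l M)"
  proof (rule homI)
    fix x assume "x \<in> carrier (cyc2 a c)"
    then show "F x \<in> carrier (ker_group l M)" using b unfolding carrier_cyc2 carrier_ker_group bij_betw_def by blast
  next
    fix x y assume "x \<in> carrier (cyc2 a c)" "y \<in> carrier (cyc2 a c)"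
    obtain i j where x: "x = (i,j)" by (cases x)
    obtain i' j' where y: "y = (i',j')" by (cases y)
    show "F (x \<otimes>\<^bsub>cyc2 a c\<^esub> y) = F x \<otimes>\<^bsub>ker_group l M\<^esub> F y"
      unfolding x y cyc2_mult ker_group_mult F_def using tor_comb_mod[OF c] tor_comb_add by simp
  qed
  then have "F \<in> iso (cyc2 a c) (ker_group l M)" using b unfolding carrier_cyc2 carrier_ker_group
    by (intro isoI) (auto simp: carrier_cyc2 carrier_ker_group)
  then have "inv_into (carrier (cyc2 a c)) F \<in> iso (ker_group l M) (cyc2 a c)"
    by (rule group.iso_set_sym[OF group_cyc2])
  then show ?thesis by (rule is_isoI)
qed

lemma iso_cyc2_zero:
  assumes h: "h \<in> iso (ker_group l M) (cyc2 a c)"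
  shows "h (0, 0) = (0, 0)"
proof -
  obtain x y where xy: "h (0, 0) = (x, y)" by (cases "h (0, 0)")
  have "h (0, 0) \<in> carrier (cyc2 a c)"
    using h zero_in_ker_set unfolding iso_def hom_def carrier_ker_group by blast
  then have r: "0 \<le> x" "x < L^a" "0 \<le> y" "y < L^c" using xy carrier_cyc2 by auto
  have "h (tor_add (0, 0) (0, 0)) = h (0, 0) \<otimes>\<^bsub>cyc2 a c\<^esub> h (0, 0)"
    using h zero_in_ker_set unfolding iso_def hom_def carrier_ker_group ker_group_mult by blast
  moreover have "tor_add (0, 0) (0, 0) = ((0::rat), (0::rat))" unfolding tor_add_def by simp
  ultimately have "h (0, 0) = h (0, 0) \<otimes>\<^bsub>cyc2 a c\<^esub> h (0, 0)" by simp
  then have "(x + x) mod L^a = x" "(y + y) mod L^c = y" unfolding xy cyc2_mult by auto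
  then show ?thesis using mod_double_eq_self r xy by metis
qed

lemma iso_cyc2_tor_comb:
  assumes M: "M \<in> Zl_mats l" and h: "h \<in> iso (ker_group l M) (cyc2 a c)"
    and e1: "tor_pt k U1 U2 \<in> ker_set l M" "h (tor_pt k U1 U2) = (1, 0)"
    and e2: "tor_pt k V1 V2 \<in> ker_set l M" "h (tor_pt k V1 V2) = (0, 1)"
  shows "tor_comb k U1 U2 V1 V2 (int i) (int j) \<in> ker_set l M \<and>
    h (tor_comb k U1 U2 V1 V2 (int i) (int j)) = (int i mod L^a, int j mod L^c)"
proof -
  let ?F = "tor_comb k U1 U2 V1 V2"
  have hom: "h (tor_add x y) = h x \<otimes>\<^bsub>cyc2 a c\<^esub> h y" if "x \<in> ker_set l M" "y \<in> ker_set l M" for x y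
    using h that unfolding iso_def hom_def carrier_ker_group ker_group_mult by blast
  have step: "?F (x + x') (y + y') \<in> ker_set l M \<and>
      h (?F (x + x') (y + y')) = ((i + i') mod L^a, (j + j') mod L^c)"
    if "?F x y \<in> ker_set l M" "h (?F x y) = (i, j)" "?F x' y' \<in> ker_set l M" "h (?F x' y') = (i', j')"
    for x y x' y' i j i' j'
  proof -
    have "?F (x + x') (y + y') = tor_add (?F x y) (?F x' y')" by (simp add: tor_comb_add)
    then show ?thesis using ker_set_tor_add[OF M that(1,3)] hom[OF that(1,3)] that(2,4) by (simp add: cyc2_mult)
  qed
  have F10: "?F 1 0 = tor_pt k U1 U2" and F01: "?F 0 1 = tor_pt k V1 V2"
    unfolding tor_comb_def by simp_all
  have F00: "?F 0 0 \<in> ker_set l M \<and> h (?F 0 0) = (0, 0)"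
    using zero_in_ker_set iso_cyc2_zero[OF h] by (simp add: tor_comb_def tor_pt_zero)
  have col: "?F (int i) 0 \<in> ker_set l M \<and> h (?F (int i) 0) = (int i mod L^a, 0)" for i
  proof (induction i)
    case (Suc i)
    have "?F (1 + int i) (0 + 0) \<in> ker_set l M \<and>
        h (?F (1 + int i) (0 + 0)) = ((1 + int i mod L^a) mod L^a, (0 + 0) mod L^c)"
      by (rule step) (use Suc e1 F10 in simp_all)
    then show ?case by (simp add: mod_add_right_eq)
  qed (use F00 in simp)
  show ?thesis
  proof (induction j)
    case (Suc j)
    have "?F (0 + int i) (1 + int j) \<in> ker_set l M \<and>
        h (?F (0 + int i) (1 + int j)) = ((0 + int i mod L^a) mod L^a, (1 + int j mod L^c) mod L^c)"
      by (rule step) (use Suc e2 F01 in simp_all)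
    then show ?case by (simp add: mod_add_right_eq)
  qed (use col in simp)
qed

lemma iso_imp_ker_basis:
  assumes M: "M \<in> Zl_mats l" and a: "a \<ge> 1" and c: "c \<ge> 1" and iso: "ker_group l M \<cong> cyc2 a c"
  shows "\<exists>k U1 U2 V1 V2. ker_basis a c k U1 U2 V1 V2 (ker_set l M)"
proof -
  obtain h where h: "h \<in> iso (ker_group l M) (cyc2 a c)" using iso unfolding is_iso_def by blast
  have bij: "bij_betw h (ker_set l M) ({0..<L^a} \<times> {0..<L^c})"
    using h unfolding iso_def carrier_ker_group carrier_cyc2 by blast
  have "(1, 0) \<in> {0..<L^a} \<times> {0..<L^c}" "(0, 1) \<in> {0..<L^a} \<times> {0..<L^c}"
    using L_pow_gt_1[OF a] L_pow_gt_1[OF c] l_ge_2 by auto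
  then have "(1, 0) \<in> h ` ker_set l M" "(0, 1) \<in> h ` ker_set l M" using bij unfolding bij_betw_def by simp_all
  then obtain e1 e2 where e1: "e1 \<in> ker_set l M" "h e1 = (1, 0)" and e2: "e2 \<in> ker_set l M" "h e2 = (0, 1)"
    by (metis imageE)
  obtain k1 a1 a2 k2 b1 b2 where "e1 = tor_pt k1 a1 a2" "e2 = tor_pt k2 b1 b2"
    using ker_set_tor_pt[OF e1(1)] ker_set_tor_pt[OF e2(1)] by blast
  then obtain k U1 U2 V1 V2 where e1k: "e1 = tor_pt k U1 U2" and e2k: "e2 = tor_pt k V1 V2"
    using tor_pt_shift[of k1 a1 a2 k2] tor_pt_shift[of k2 b1 b2 k1] by (metis add.commute)
  let ?F = "tor_comb k U1 U2 V1 V2"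
  note F = iso_cyc2_tor_comb[OF M h e1[unfolded e1k] e2[unfolded e2k]]
  have F_box: "?F i j \<in> ker_set l M \<and> h (?F i j) = (i, j)" if "(i, j) \<in> {0..<L^a} \<times> {0..<L^c}" for i j
    using F[of "nat i" "nat j"] that by simp
  have inj_h: "inj_on h (ker_set l M)" and h_box: "h ` ker_set l M = {0..<L^a} \<times> {0..<L^c}"
    using bij unfolding bij_betw_def by simp_all
  have "bij_betw (\<lambda>(i, j). ?F i j) ({0..<L^a} \<times> {0..<L^c}) (ker_set l M)"
  proof (rule bij_betw_byWitness[where f' = h])
    show "\<forall>x\<in>ker_set l M. (\<lambda>(i, j). ?F i j) (h x) = x"
    proof
      fix x assume x: "x \<in> ker_set l M"
      obtain i j where hx: "h x = (i, j)" by (cases "h x")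
      have "h x \<in> h ` ker_set l M" using x by (rule imageI)
      then have "(i, j) \<in> {0..<L^a} \<times> {0..<L^c}" using h_box hx by simp
      then have Fin: "?F i j \<in> ker_set l M" and Fh: "h (?F i j) = h x" using F_box[of i j] hx by simp_all
      then show "(\<lambda>(i, j). ?F i j) (h x) = x" using inj_onD[OF inj_h Fh Fin x] hx by simp
    qed
    show "\<forall>p\<in>{0..<L^a} \<times> {0..<L^c}. h ((\<lambda>(i, j). ?F i j) p) = p" using F_box by auto
    show "(\<lambda>(i, j). ?F i j) ` ({0..<L^a} \<times> {0..<L^c}) \<subseteq> ker_set l M" using F_box by auto
    show "h ` ker_set l M \<subseteq> {0..<L^a} \<times> {0..<L^c}" using h_box by simp
  qed
  moreover have "?F (L^a) 0 = ?F 0 0" "?F 0 (L^c) = ?F 0 0"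
  proof -
    have "?F (L^a) 0 \<in> ker_set l M" "h (?F (L^a) 0) = (0, 0)"
      "?F 0 (L^c) \<in> ker_set l M" "h (?F 0 (L^c)) = (0, 0)"
      "?F 0 0 \<in> ker_set l M" "h (?F 0 0) = (0, 0)"
      using F[of "l^a" 0] F[of 0 "l^c"] F[of 0 0] by simp_all
    then show "?F (L^a) 0 = ?F 0 0" "?F 0 (L^c) = ?F 0 0"
      using inj_h unfolding inj_on_def by metis+
  qed
  then have "[L^a * U1 = 0] (mod L^k)" "[L^a * U2 = 0] (mod L^k)" "[L^c * V1 = 0] (mod L^k)"
    "[L^c * V2 = 0] (mod L^k)"
    unfolding tor_comb_def tor_pt_eq_iff by auto
  ultimately show ?thesis unfolding ker_basis_def by blast
qed

lemma iso_iff_ker_basis: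
  assumes M: "M \<in> Zl_mats l" and a: "a \<ge> 1" and c: "c \<ge> 1"
  shows "ker_group l M \<cong> cyc2 a c \<longleftrightarrow> (\<exists>k U1 U2 V1 V2. ker_basis a c k U1 U2 V1 V2 (ker_set l M))"
  using iso_imp_ker_basis[OF assms] ker_basis_imp_iso by blast

definition torsion :: "nat \<Rightarrow> (rat \<times> rat) set" where
  "torsion k = {tor_pt k w1 w2 | w1 w2. True}"

lemma torsion_mono: "k \<le> m \<Longrightarrow> torsion k \<subseteq> torsion m"
  unfolding torsion_def using tor_pt_shift_le by blast

lemma tor_pt_in_torsion:
  assumes "[L^c * X1 = 0] (mod L^k)" "[L^c * X2 = 0] (mod L^k)"
  shows "tor_pt k X1 X2 \<in> torsion c"
proof (cases "k \<le> c")
  case True then show ?thesis using torsion_mono[OF True] unfolding torsion_def by blast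
next
  case False
  then obtain j where j: "k = c + j" by (metis le_Suc_ex nat_le_linear)
  have p: "L^c > 0" using L_pow_pos by simp
  have "L^(c+j) dvd L^c * X1" "L^(c+j) dvd L^c * X2" using assms j by (simp_all add: cong_0_iff)
  then have "L^j dvd X1" "L^j dvd X2" using p l_ge_2 by (simp_all add: power_add)
  then obtain Y1 Y2 where Y: "X1 = L^j * Y1" "X2 = L^j * Y2" by (meson dvdE)
  have "tor_pt k X1 X2 = tor_pt c Y1 Y2" unfolding j Y by (rule tor_pt_shift[symmetric])
  then show ?thesis unfolding torsion_def by blast
qed

lemma torsion_eq_image: "torsion k = (\<lambda>(w1,w2). tor_pt k w1 w2) ` ({0..<L^k} \<times> {0..<L^k})"
proof
  show "torsion k \<subseteq> (\<lambda>(w1,w2). tor_pt k w1 w2) ` ({0..<L^k} \<times> {0..<L^k})"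
  proof
    fix v assume "v \<in> torsion k"
    then obtain w1 w2 where v: "v = tor_pt k w1 w2" unfolding torsion_def by blast
    have "tor_pt k w1 w2 = tor_pt k (w1 mod L^k) (w2 mod L^k)" unfolding tor_pt_eq_iff by (simp add: cong_def)
    moreover have "(w1 mod L^k, w2 mod L^k) \<in> {0..<L^k} \<times> {0..<L^k}" using L_pow_pos[of k] by simp
    ultimately show "v \<in> (\<lambda>(w1,w2). tor_pt k w1 w2) ` ({0..<L^k} \<times> {0..<L^k})" unfolding v by force
  qed
qed (auto simp: torsion_def)

lemma finite_torsion: "finite (torsion k)" unfolding torsion_eq_image by simp

lemma card_box_L_pow: "card ({0..<L^k} \<times> {0..<L^k}) = l^k * l^k"
  by (simp add: card_cartesian_product nat_power_eq)

lemma card_torsion_le: "card (torsion k) \<le> l^k * l^k"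
  unfolding torsion_eq_image using card_image_le[of "{0..<L^k} \<times> {0..<L^k}" "\<lambda>(w1,w2). tor_pt k w1 w2"] card_box_L_pow by simp

lemma ker_basis_subset_torsion:
  assumes basis: "ker_basis a c k U1 U2 V1 V2 (ker_set l M)" and ac: "a \<le> c"
  shows "ker_set l M \<subseteq> torsion c"
proof
  fix v assume v: "v \<in> ker_set l M"
  note c = ker_basisD(1-4)[OF basis] and b = ker_basisD(5)[OF basis]
  obtain i j where v': "v = tor_comb k U1 U2 V1 V2 i j" using v b unfolding bij_betw_def by force
  have e: "L^c = L^(c-a) * L^a" using ac by (simp flip: power_add)
  have "[L^c * (i*U1 + j*V1) = i * L^(c-a) * (L^a * U1) + j * (L^c * V1)] (mod L^k)" by (simp add: e algebra_simps)
  moreover have "[i * L^(c-a) * (L^a * U1) + j * (L^c * V1) = i * L^(c-a) * 0 + j * 0] (mod L^k)"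
    using c by (intro cong_add cong_mult cong_refl) auto
  ultimately have c1: "[L^c * (i*U1 + j*V1) = 0] (mod L^k)" by (simp add: cong_trans)
  have "[L^c * (i*U2 + j*V2) = i * L^(c-a) * (L^a * U2) + j * (L^c * V2)] (mod L^k)" by (simp add: e algebra_simps)
  moreover have "[i * L^(c-a) * (L^a * U2) + j * (L^c * V2) = i * L^(c-a) * 0 + j * 0] (mod L^k)"
    using c by (intro cong_add cong_mult cong_refl) auto
  ultimately have c2: "[L^c * (i*U2 + j*V2) = 0] (mod L^k)" by (simp add: cong_trans)
  show "v \<in> torsion c" unfolding v' tor_comb_def by (rule tor_pt_in_torsion[OF c1 c2])
qed

lemma torsion_subset_ker_basis:
  assumes basis: "ker_basis a c k U1 U2 V1 V2 (ker_set l M)" and ac: "a \<le> c"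
  shows "torsion a \<subseteq> ker_set l M"
proof -
  note c = ker_basisD(1-4)[OF basis] and b = ker_basisD(5)[OF basis]
  define J where "J = (\<lambda>j'. L^(c-a) * j') ` {0..<L^a}"
  have e: "L^c = L^(c-a) * L^a" using ac by (simp flip: power_add)
  have Jsub: "J \<subseteq> {0..<L^c}"
  proof
    fix j assume "j \<in> J"
    then obtain j' where j'in: "j' \<in> {0..<L^a}" and jj: "j = L^(c-a) * j'" unfolding J_def by (rule imageE)
    then have j': "j = L^(c-a) * j'" "0 \<le> j'" "j' < L^a" by auto
    have "L^(c-a) * j' < L^(c-a) * L^a" using j' L_pow_pos[of "c-a"] by simp
    then show "j \<in> {0..<L^c}" using j' L_pow_pos[of "c-a"] e by simp
  qed
  have injJ: "inj_on (\<lambda>j'. L^(c-a) * j') {0..<L^a}" using L_pow_pos[of "c-a"] l_ge_2 by (intro inj_onI) simp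
  have cardJ: "card J = l^a" unfolding J_def using card_image[OF injJ] by (simp add: nat_power_eq)
  define S where "S = (\<lambda>(i,j). tor_comb k U1 U2 V1 V2 i j) ` ({0..<L^a} \<times> J)"
  have sub: "{0..<L^a} \<times> J \<subseteq> {0..<L^a} \<times> {0..<L^c}" using Jsub by auto
  have injS: "inj_on (\<lambda>(i,j). tor_comb k U1 U2 V1 V2 i j) ({0..<L^a} \<times> J)"
    using b sub unfolding bij_betw_def by (meson inj_on_subset)
  have cardS: "card S = l^a * l^a" unfolding S_def card_image[OF injS] card_cartesian_product cardJ by (simp add: nat_power_eq)
  have SK: "S \<subseteq> ker_set l M" unfolding S_def using b sub unfolding bij_betw_def by blast
  have SD: "S \<subseteq> torsion a"
  proof
    fix v assume "v \<in> S"
    then obtain i j' where v: "v = tor_comb k U1 U2 V1 V2 i (L^(c-a) * j')" unfolding S_def J_def by auto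
    have "[L^a * (i*U1 + L^(c-a) * j' * V1) = i * (L^a * U1) + j' * (L^c * V1)] (mod L^k)" by (simp add: e algebra_simps)
    moreover have "[i * (L^a * U1) + j' * (L^c * V1) = i * 0 + j' * 0] (mod L^k)"
      using c by (intro cong_add cong_mult cong_refl) auto
    ultimately have c1: "[L^a * (i*U1 + L^(c-a) * j' * V1) = 0] (mod L^k)" by (simp add: cong_trans)
    have "[L^a * (i*U2 + L^(c-a) * j' * V2) = i * (L^a * U2) + j' * (L^c * V2)] (mod L^k)" by (simp add: e algebra_simps)
    moreover have "[i * (L^a * U2) + j' * (L^c * V2) = i * 0 + j' * 0] (mod L^k)"
      using c by (intro cong_add cong_mult cong_refl) auto
    ultimately have c2: "[L^a * (i*U2 + L^(c-a) * j' * V2) = 0] (mod L^k)" by (simp add: cong_trans)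
    show "v \<in> torsion a" unfolding v tor_comb_def by (rule tor_pt_in_torsion[OF c1 c2])
  qed
  have "S = torsion a" using card_seteq[OF finite_torsion SD] cardS card_torsion_le[of a] by simp
  then show ?thesis using SK by simp
qed

lemma torsion_subset_ker_imp_lone:
  assumes M: "M \<in> Zl_mats l" and a: "a \<ge> 1" and D: "torsion a \<subseteq> ker_set l M"
  shows "M a = lone l a"
proof -
  have "tor_pt a 1 0 \<in> ker_set l M" "tor_pt a 0 1 \<in> ker_set l M" using D unfolding torsion_def by auto
  then have c: "fixed_mod (M a) a 1 0" "fixed_mod (M a) a 0 1" using tor_pt_in_ker_set_iff[OF M] by auto
  obtain x y z w where Ma: "M a = (x,y,z,w)" by (cases "M a")
  have r: "x \<in> {0..<L^a}" "y \<in> {0..<L^a}" "z \<in> {0..<L^a}" "w \<in> {0..<L^a}" using Zl_mats_range[OF M, of a] Ma by auto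
  have g: "L^a > 1" by (rule L_pow_gt_1[OF a])
  have cg: "[x = 1] (mod L^a)" "[y = 0] (mod L^a)" "[z = 0] (mod L^a)" "[w = 1] (mod L^a)"
    using c unfolding Ma fixed_mod_simp by (simp_all add: cong_iff_dvd_diff cong_0_iff)
  have "x = 1" "y = 0" "z = 0" "w = 1" using cg r g by (auto simp: cong_def)
  then show ?thesis using Ma lone_level a by simp
qed

lemma ker_set_agree_low:
  assumes M: "M \<in> Zl_mats l" and M': "M' \<in> Zl_mats l" and eq: "M' (Suc c) = M (Suc c)" and m: "m \<le> Suc c"
  shows "tor_pt m w1 w2 \<in> ker_set l M' \<longleftrightarrow> tor_pt m w1 w2 \<in> ker_set l M"
proof -
  have e: "tor_pt m w1 w2 = tor_pt (Suc c) (L^(Suc c - m) * w1) (L^(Suc c - m) * w2)" by (rule tor_pt_shift_le[OF m])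
  show ?thesis unfolding e tor_pt_in_ker_set_iff[OF M] tor_pt_in_ker_set_iff[OF M'] eq ..
qed

lemma fixed_mod_smult: "fixed_mod A k w1 w2 \<Longrightarrow> fixed_mod A k (x * w1) (x * w2)"
proof (cases A)
  case (fields a b c e)
  assume "fixed_mod A k w1 w2"
  then have h: "[(a - 1) * w1 + b * w2 = 0] (mod L^k)" "[c * w1 + (e - 1) * w2 = 0] (mod L^k)"
    unfolding fields fixed_mod_simp by auto
  have "[x * ((a - 1) * w1 + b * w2) = x * 0] (mod L^k)" "[x * (c * w1 + (e - 1) * w2) = x * 0] (mod L^k)"
    by (rule cong_scalar_left[OF h(1)], rule cong_scalar_left[OF h(2)])
  then show ?thesis unfolding fields fixed_mod_simp by (simp add: algebra_simps)
qed

lemma ker_set_mult_l: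
  assumes M: "M \<in> Zl_mats l" and v: "tor_pt (Suc k) w1 w2 \<in> ker_set l M"
  shows "tor_pt k w1 w2 \<in> ker_set l M"
proof -
  have "fixed_mod (M (k + 1)) (k + 1) (L^1 * w1) (L^1 * w2)"
    using fixed_mod_smult v tor_pt_in_ker_set_iff[OF M] by simp
  then show ?thesis using fixed_mod_level_shift[OF M] tor_pt_in_ker_set_iff[OF M] by blast
qed

lemma torsion_Suc_of_mult_l:
  assumes "tor_pt m w1 w2 \<in> torsion c"
  shows "tor_pt (Suc m) w1 w2 \<in> torsion (Suc c)"
proof (cases "m \<le> c")
  case True
  then show ?thesis using torsion_mono[of "Suc m" "Suc c"] unfolding torsion_def by blast
next
  case False
  obtain u1 u2 where u: "tor_pt m w1 w2 = tor_pt c u1 u2" using assms unfolding torsion_def by blast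
  also have "\<dots> = tor_pt m (L^(m-c) * u1) (L^(m-c) * u2)" using False by (intro tor_pt_shift_le) simp
  finally have "[w1 = L^(m-c) * u1] (mod L^m)" "[w2 = L^(m-c) * u2] (mod L^m)" using tor_pt_eq_iff by auto
  then obtain s1 s2 where s: "w1 = L^(m-c) * u1 + L^m * s1" "w2 = L^(m-c) * u2 + L^m * s2"
    by (metis cong_iff_lin cong_sym mult.commute)
  have e: "L^m = L^(m-c) * L^c" using False by (simp flip: power_add)
  have "tor_pt (Suc c) (u1 + L^c * s1) (u2 + L^c * s2) =
      tor_pt (Suc c + (m - c)) (L^(m-c) * (u1 + L^c * s1)) (L^(m-c) * (u2 + L^c * s2))"
    by (rule tor_pt_shift)
  also have "\<dots> = tor_pt (Suc m) w1 w2" using False unfolding s e by (simp add: algebra_simps)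
  finally show ?thesis unfolding torsion_def by (metis (mono_tags, lifting) mem_Collect_eq)
qed

lemma ker_set_subset_torsion_of_level_eq:
  assumes M: "M \<in> Zl_mats l" and M': "M' \<in> Zl_mats l" and eq: "M' (Suc c) = M (Suc c)"
    and D: "ker_set l M \<subseteq> torsion c"
  shows "ker_set l M' \<subseteq> torsion c"
proof -
  have "tor_pt m w1 w2 \<in> torsion c" if "tor_pt m w1 w2 \<in> ker_set l M'" for m w1 w2
    using that
  proof (induction m arbitrary: w1 w2 rule: less_induct)
    case (less m)
    show ?case
    proof (cases "m \<le> Suc c")
      case True
      then show ?thesis using ker_set_agree_low[OF M M' eq True] less.prems D by blast
    next
      case False
      then obtain m' where m': "m = Suc m'" "m' < m" by (cases m) auto
      then have "tor_pt m' w1 w2 \<in> torsion c" using less ker_set_mult_l[OF M'] by blast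
      then obtain u1 u2 where u: "tor_pt m w1 w2 = tor_pt (Suc c) u1 u2"
        using torsion_Suc_of_mult_l m'(1) unfolding torsion_def by blast
      then have "tor_pt (Suc c) u1 u2 \<in> ker_set l M" using ker_set_agree_low[OF M M' eq] less.prems by simp
      then show ?thesis using u D by auto
    qed
  qed
  then show ?thesis using ker_set_tor_pt by blast
qed

lemma ker_set_eq_of_level_eq:
  assumes M: "M \<in> Zl_mats l" and M': "M' \<in> Zl_mats l" and eq: "M' (Suc c) = M (Suc c)"
    and D: "ker_set l M \<subseteq> torsion c"
  shows "ker_set l M' = ker_set l M"
proof -
  have "v \<in> ker_set l M' \<longleftrightarrow> v \<in> ker_set l M" if "v \<in> torsion c" for v
    using that ker_set_agree_low[OF M M' eq, of c] unfolding torsion_def by auto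
  then show ?thesis using D ker_set_subset_torsion_of_level_eq[OF M M' eq D] by blast
qed

definition lift_mat :: "mat4 \<Rightarrow> mat4" where
  "lift_mat = (\<lambda>(a,b,c,e). (1 + L*(a-1), L*b, L*c, 1 + L*(e-1)))"

definition lift :: "ladic_mat \<Rightarrow> ladic_mat" where
  "lift M = (\<lambda>n. mmod (L^n) (lift_mat (M n)))"

lemma lift_mat_cong:
  assumes "mmod (L^n) A = mmod (L^n) B"
  shows "mmod (L^Suc n) (lift_mat A) = mmod (L^Suc n) (lift_mat B)"
proof (cases A; cases B)
  fix a b c e a' b' c' e' assume A: "A = (a,b,c,e)" and B: "B = (a',b',c',e')"
  have h: "[x = y] (mod L^n) \<Longrightarrow> [L * x = L * y] (mod L^Suc n)" for x y
    by (simp add: cong_iff_dvd_diff right_diff_distrib[symmetric] mult_dvd_mono)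
  have h1: "[x = y] (mod L^n) \<Longrightarrow> [1 + L * (x - 1) = 1 + L * (y - 1)] (mod L^Suc n)" for x y
  proof -
    assume "[x = y] (mod L^n)"
    then have "[x - 1 = y - 1] (mod L^n)" by (rule cong_diff[OF _ cong_refl])
    then have "[L * (x - 1) = L * (y - 1)] (mod L^Suc n)" by (rule h)
    then show ?thesis by (rule cong_add[OF cong_refl])
  qed
  from assms have "[a = a'] (mod L^n)" "[b = b'] (mod L^n)" "[c = c'] (mod L^n)" "[e = e'] (mod L^n)"
    unfolding A B mmod_eq_iff by auto
  then show ?thesis unfolding A B lift_mat_def using h h1 by (simp add: mmod_eq_iff)
qed

lemma lift_Zl_mats:
  assumes M: "M \<in> Zl_mats l"
  shows "lift M \<in> Zl_mats l"
  unfolding Zl_mats_def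
proof (intro CollectI allI)
  fix n
  have "mmod (L^n) (lift M (Suc n)) = mmod (L^n) (lift_mat (M (Suc n)))"
    unfolding lift_def by (rule mmod_dvd) simp
  also have "\<dots> = mmod (L^n) (mmod (L^Suc n) (lift_mat (M (Suc n))))" by (rule mmod_dvd[symmetric]) simp
  also have "\<dots> = mmod (L^n) (mmod (L^Suc n) (lift_mat (M n)))"
    using lift_mat_cong[of n "M (Suc n)" "M n"] Zl_matsD[OF M, of n] by simp
  also have "\<dots> = mmod (L^n) (lift_mat (M n))" by (rule mmod_dvd) simp
  finally show "lift M n = mmod (L^n) (lift M (Suc n))" unfolding lift_def by simp
qed

lemma lift_level:
  assumes M: "M \<in> Zl_mats l"
  shows "lift M (Suc n) = mmod (L^Suc n) (lift_mat (M n))"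
  unfolding lift_def using lift_mat_cong[of n "M (Suc n)" "M n"] Zl_matsD[OF M, of n] by simp

lemma fixed_mod_lift_mat: "fixed_mod (lift_mat A) (Suc k) w1 w2 \<longleftrightarrow> fixed_mod A k w1 w2"
proof (cases A)
  case (fields a b c e)
  have e1: "(1 + L * (a - 1) - 1) * w1 + L * b * w2 = L * ((a - 1) * w1 + b * w2)" by (simp add: algebra_simps)
  have e2: "L * c * w1 + (1 + L * (e - 1) - 1) * w2 = L * (c * w1 + (e - 1) * w2)" by (simp add: algebra_simps)
  have d: "[L * x = 0] (mod L^Suc k) \<longleftrightarrow> [x = 0] (mod L^k)" for x
    using l_ge_2 by (simp add: cong_0_iff)
  show ?thesis unfolding fields lift_mat_def fixed_mod_simp split e1 e2 d ..
qed

lemma tor_pt_in_ker_lift_iff: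
  assumes M: "M \<in> Zl_mats l"
  shows "tor_pt (Suc k) w1 w2 \<in> ker_set l (lift M) \<longleftrightarrow> tor_pt k w1 w2 \<in> ker_set l M"
  unfolding tor_pt_in_ker_set_iff[OF lift_Zl_mats[OF M]] tor_pt_in_ker_set_iff[OF M] lift_level[OF M] fixed_mod_mmod fixed_mod_lift_mat ..

lemma tor_comb_eq_iff:
  "tor_comb k U1 U2 V1 V2 x y = tor_comb k U1 U2 V1 V2 x' y' \<longleftrightarrow>
     tor_comb k U1 U2 V1 V2 (x - x') (y - y') = tor_comb k U1 U2 V1 V2 0 0"
proof -
  have "[x*U1 + y*V1 = x'*U1 + y'*V1] (mod L^k) \<longleftrightarrow> [(x - x')*U1 + (y - y')*V1 = 0] (mod L^k)"
    by (simp add: cong_iff_dvd_diff algebra_simps)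
  moreover have "[x*U2 + y*V2 = x'*U2 + y'*V2] (mod L^k) \<longleftrightarrow> [(x - x')*U2 + (y - y')*V2 = 0] (mod L^k)"
    by (simp add: cong_iff_dvd_diff algebra_simps)
  ultimately show ?thesis unfolding tor_comb_def tor_pt_eq_iff by simp
qed

lemma ker_basis_tor_comb_zero:
  assumes basis: "ker_basis a c k U1 U2 V1 V2 A" and e: "tor_comb k U1 U2 V1 V2 x y = tor_comb k U1 U2 V1 V2 0 0"
  shows "L^a dvd x \<and> L^c dvd y"
proof -
  note c = ker_basisD(1-4)[OF basis] and b = ker_basisD(5)[OF basis]
  have "tor_comb k U1 U2 V1 V2 (x mod L^a) (y mod L^c) = tor_comb k U1 U2 V1 V2 0 0" using tor_comb_mod[OF c] e by simp
  moreover have "(x mod L^a, y mod L^c) \<in> {0..<L^a} \<times> {0..<L^c}" "(0,0) \<in> {0..<L^a} \<times> {0..<L^c}"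
    using L_pow_pos by auto
  ultimately have "(x mod L^a, y mod L^c) = (0,0)" using b unfolding bij_betw_def inj_on_def by fastforce
  then show ?thesis by (simp add: dvd_eq_mod_eq_0)
qed

lemma ker_basis_rescale:
  assumes "ker_basis a c k U1 U2 V1 V2 A"
  shows "ker_basis a c (Suc k) (L*U1) (L*U2) (L*V1) (L*V2) A"
proof -
  have h: "[x = 0] (mod L^k) \<Longrightarrow> [L * x = 0] (mod L^Suc k)" for x by (simp add: cong_0_iff mult_dvd_mono)
  note c = ker_basisD(1-4)[OF assms] and b = ker_basisD(5)[OF assms]
  have "tor_comb k U1 U2 V1 V2 i j = tor_comb (Suc k) (L*U1) (L*U2) (L*V1) (L*V2) i j" for i j
    unfolding tor_comb_def using tor_pt_shift[of k _ _ 1] by (simp add: algebra_simps)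
  then have b': "bij_betw (\<lambda>(i,j). tor_comb (Suc k) (L*U1) (L*U2) (L*V1) (L*V2) i j) ({0..<L^a} \<times> {0..<L^c}) A"
    using b by simp
  have e: "L^a * (L * U1) = L * (L^a * U1)" "L^a * (L * U2) = L * (L^a * U2)"
       "L^c * (L * V1) = L * (L^c * V1)" "L^c * (L * V2) = L * (L^c * V2)" by (simp_all add: algebra_simps)
  show ?thesis unfolding ker_basis_def e using b' h[OF c(1)] h[OF c(2)] h[OF c(3)] h[OF c(4)] by blast
qed

lemma cong_mult_L: "[x = y] (mod L^k) \<Longrightarrow> [L * x = L * y] (mod L^Suc k)"
  by (simp add: cong_iff_dvd_diff right_diff_distrib[symmetric] mult_dvd_mono)

lemma cong_cancel_L: "[L * x = L * y] (mod L^Suc k) \<Longrightarrow> [x = y] (mod L^k)"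
  using l_ge_2 by (simp add: cong_iff_dvd_diff right_diff_distrib[symmetric])

lemma cong_obtain:
  fixes w u m :: int
  shows "[w = u] (mod m) \<Longrightarrow> \<exists>z. w = u + m * z"
proof -
  assume "[w = u] (mod m)"
  then have "m dvd w - u" by (simp add: cong_iff_dvd_diff)
  then obtain z where "w - u = m * z" by blast
  then show ?thesis by (intro exI[of _ z]) simp
qed

lemma L_pow_pred: "a \<ge> 1 \<Longrightarrow> L^a = L * L^(a-1)"
  by (metis Suc_diff_1 less_le_trans zero_less_one power_Suc)

lemma dvd_pred:
  assumes "a \<ge> 1" "L^a dvd L * s"
  shows "L^(a-1) dvd s"
  using assms l_ge_2 by (simp add: L_pow_pred[OF assms(1)])

lemma ker_basis_obtain:
  assumes "ker_basis a c k U1 U2 V1 V2 A" "v \<in> A"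
  obtains i j where "(i,j) \<in> {0..<L^a} \<times> {0..<L^c}" "tor_comb k U1 U2 V1 V2 i j = v"
proof -
  have "v \<in> (\<lambda>(i,j). tor_comb k U1 U2 V1 V2 i j) ` ({0..<L^a} \<times> {0..<L^c})"
    using ker_basisD(5)[OF assms(1)] assms(2) unfolding bij_betw_def by blast
  then obtain p where p: "p \<in> {0..<L^a} \<times> {0..<L^c}" "v = (\<lambda>(i,j). tor_comb k U1 U2 V1 V2 i j) p" by (rule imageE)
  obtain i j where "p = (i,j)" by (cases p)
  then show ?thesis using that p by simp
qed

lemma tor_comb_in_ker_basis:
  assumes "ker_basis a c k U1 U2 V1 V2 A"
  shows "tor_comb k U1 U2 V1 V2 i j \<in> A"
proof -
  note c = ker_basisD(1-4)[OF assms] and b = ker_basisD(5)[OF assms]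
  have "(i mod L^a, j mod L^c) \<in> {0..<L^a} \<times> {0..<L^c}" using L_pow_pos by auto
  then have "tor_comb k U1 U2 V1 V2 (i mod L^a) (j mod L^c) \<in> A" using b unfolding bij_betw_def by force
  then show ?thesis using tor_comb_mod[OF c] by simp
qed

lemma inj_on_tor_comb_box:
  assumes "\<And>x y. tor_comb k U1 U2 V1 V2 x y = tor_comb k U1 U2 V1 V2 0 0 \<Longrightarrow> A dvd x \<and> B dvd y"
  shows "inj_on (\<lambda>(i, j). tor_comb k U1 U2 V1 V2 i j) ({0..<A} \<times> {0..<B})"
proof (rule inj_onI)
  fix p p' assume p: "p \<in> {0..<A} \<times> {0..<B}" and p': "p' \<in> {0..<A} \<times> {0..<B}"
    and eq: "(\<lambda>(i, j). tor_comb k U1 U2 V1 V2 i j) p = (\<lambda>(i, j). tor_comb k U1 U2 V1 V2 i j) p'"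
  obtain i j where ij: "p = (i, j)" by (cases p)
  obtain i' j' where ij': "p' = (i', j')" by (cases p')
  have "tor_comb k U1 U2 V1 V2 (i - i') (j - j') = tor_comb k U1 U2 V1 V2 0 0"
    using eq tor_comb_eq_iff unfolding ij ij' by simp
  then have "A dvd i - i'" "B dvd j - j'" using assms by blast+
  moreover have "- A < i - i'" "i - i' < A" "- B < j - j'" "j - j' < B" using p p' unfolding ij ij' by auto
  ultimately have "i - i' = 0" "j - j' = 0" using dvd_small_int by blast+
  then show "p = p'" unfolding ij ij' by simp
qed

lemma add_mult_digit_bound:
  fixes i s m q :: int
  assumes "0 \<le> i" "i < m" "0 \<le> s" "s < q"
  shows "0 \<le> i + m * s" "i + m * s < m * q"
proof -
  have "m * s \<le> m * (q - 1)" using assms by (intro mult_left_mono) auto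
  moreover have "0 \<le> m * s" using assms by simp
  ultimately show "0 \<le> i + m * s" "i + m * s < m * q" using assms by (simp_all add: right_diff_distrib)
qed

text \<open>Lifting multiplies every kernel element by \<open>l\<^sup>-\<^sup>1\<close>: a basis \<open>u, v\<close> of orders
  \<open>l\<^sup>a, l\<^sup>c\<close> of \<open>ker (M - I)\<close> becomes a basis \<open>u/l, v/l\<close> of \<open>ker (lift M - I)\<close>. Injectivity
  needs \<open>a, c \<ge> 1\<close>; surjectivity needs that the \<open>l\<close>-torsion, which lies in the kernel of
  \<open>lift M - I\<close>, is spanned by \<open>l\<^sup>a u/l\<close> and \<open>l\<^sup>c v/l\<close>.\<close>

lemma ker_basis_lift_tor_comb_zero:
  assumes basis: "ker_basis a c k U1 U2 V1 V2 A" and a: "1 \<le> a" "1 \<le> c"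
    and zero: "tor_comb (Suc k) U1 U2 V1 V2 x y = tor_comb (Suc k) U1 U2 V1 V2 0 0"
  shows "L^Suc a dvd x \<and> L^Suc c dvd y"
proof -
  have g: "[x * U1 + y * V1 = 0] (mod L^Suc k)" "[x * U2 + y * V2 = 0] (mod L^Suc k)"
    using zero unfolding tor_comb_def tor_pt_eq_iff by auto
  then have "tor_comb k U1 U2 V1 V2 x y = tor_comb k U1 U2 V1 V2 0 0"
    unfolding tor_comb_def tor_pt_eq_iff by (auto intro: cong_dvd_modulus[of _ _ "L^Suc k"])
  then have "L^a dvd x" "L^c dvd y" using ker_basis_tor_comb_zero[OF basis] by auto
  then obtain s r where sr: "x = L^a * s" "y = L^c * r" by (meson dvdE)
  have pa: "L^a = L * L^(a-1)" "L^c = L * L^(c-1)" using L_pow_pred a by blast+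
  have "[L * (L^(a-1) * s * U1 + L^(c-1) * r * V1) = L * 0] (mod L^Suc k)"
    using g(1) unfolding sr by (simp add: pa algebra_simps)
  then have y1: "[L^(a-1) * s * U1 + L^(c-1) * r * V1 = 0] (mod L^k)" by (rule cong_cancel_L)
  have "[L * (L^(a-1) * s * U2 + L^(c-1) * r * V2) = L * 0] (mod L^Suc k)"
    using g(2) unfolding sr by (simp add: pa algebra_simps)
  then have y2: "[L^(a-1) * s * U2 + L^(c-1) * r * V2 = 0] (mod L^k)" by (rule cong_cancel_L)
  have "tor_comb k U1 U2 V1 V2 (L^(a-1) * s) (L^(c-1) * r) = tor_comb k U1 U2 V1 V2 0 0"
    unfolding tor_comb_def tor_pt_eq_iff using y1 y2 by (simp add: algebra_simps)
  then have "L^a dvd L^(a-1) * s" "L^c dvd L^(c-1) * r" using ker_basis_tor_comb_zero[OF basis] by auto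
  then have "L dvd s" "L dvd r" using pa L_pow_pos by (auto simp: mult.commute)
  then show ?thesis unfolding sr by (auto simp: mult_dvd_mono mult.commute)
qed

lemma ker_basis_lift_torsion_1:
  assumes basis: "ker_basis a c k U1 U2 V1 V2 (ker_set l M)" and a: "1 \<le> a" "a \<le> c" and k: "1 \<le> k"
  obtains s r where "s \<in> {0..<L}" "r \<in> {0..<L}"
    "[L^k * z1 = L^a * s * U1 + L^c * r * V1] (mod L^Suc k)"
    "[L^k * z2 = L^a * s * U2 + L^c * r * V2] (mod L^Suc k)"
proof -
  have "tor_pt 1 z1 z2 \<in> torsion a" using torsion_mono[OF a(1)] unfolding torsion_def by blast
  then have "tor_pt 1 z1 z2 \<in> ker_set l M" using torsion_subset_ker_basis[OF basis a(2)] by blast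
  then obtain sa ra where sr: "(sa, ra) \<in> {0..<L^a} \<times> {0..<L^c}"
    and "tor_comb k U1 U2 V1 V2 sa ra = tor_pt 1 z1 z2"
    using ker_basis_obtain[OF basis] by metis
  then have "tor_comb k U1 U2 V1 V2 sa ra = tor_pt k (L^(k-1) * z1) (L^(k-1) * z2)"
    using tor_pt_shift_le[OF k] by simp
  then have g: "[sa * U1 + ra * V1 = L^(k-1) * z1] (mod L^k)" "[sa * U2 + ra * V2 = L^(k-1) * z2] (mod L^k)"
    unfolding tor_comb_def tor_pt_eq_iff by auto
  have pk: "L^k = L * L^(k-1)" using L_pow_pred[OF k] by blast
  have gL: "[L * (sa * U1 + ra * V1) = L^k * z1] (mod L^Suc k)" "[L * (sa * U2 + ra * V2) = L^k * z2] (mod L^Suc k)"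
    using cong_mult_L[OF g(1)] cong_mult_L[OF g(2)] pk by (simp_all add: mult.assoc)
  have z0: "[L * (L^(k-1) * z) = 0] (mod L^k)" for z
    unfolding cong_0_iff using pk by (simp add: mult.assoc[symmetric])
  have "[L * (sa * U1 + ra * V1) = 0] (mod L^k)" "[L * (sa * U2 + ra * V2) = 0] (mod L^k)"
    using cong_trans[OF cong_scalar_left[OF g(1), of L] z0] cong_trans[OF cong_scalar_left[OF g(2), of L] z0]
    by auto
  then have "tor_comb k U1 U2 V1 V2 (L * sa) (L * ra) = tor_comb k U1 U2 V1 V2 0 0"
    unfolding tor_comb_def tor_pt_eq_iff by (simp add: algebra_simps)
  then have "L^a dvd L * sa" "L^c dvd L * ra" using ker_basis_tor_comb_zero[OF basis] by auto
  then have "L^(a-1) dvd sa" "L^(c-1) dvd ra" using dvd_pred a by auto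
  then obtain s r where sg: "sa = L^(a-1) * s" "ra = L^(c-1) * r" by (meson dvdE)
  have pa: "L^a = L^(a-1) * L" "L^c = L^(c-1) * L" using L_pow_pred a by (auto simp: mult.commute)
  have digit: "x \<in> {0..<L}" if "0 < m" "m * x \<in> {0..<m * L}" for m x :: int
    using that by (auto simp: zero_le_mult_iff mult_less_cancel_left_pos)
  have "s \<in> {0..<L}" "r \<in> {0..<L}"
    using sr digit[OF L_pow_pos[of "a-1"], of s] digit[OF L_pow_pos[of "c-1"], of r] unfolding sg pa by auto
  moreover have "L * (sa * U1 + ra * V1) = L^a * s * U1 + L^c * r * V1"
    "L * (sa * U2 + ra * V2) = L^a * s * U2 + L^c * r * V2"
    unfolding sg pa by (simp_all add: algebra_simps)
  ultimately show ?thesis using that gL by (metis cong_sym)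
qed

lemma ker_set_lift_decomp:
  assumes M: "M \<in> Zl_mats l" and basis: "ker_basis a c k U1 U2 V1 V2 (ker_set l M)"
    and v: "v \<in> ker_set l (lift M)"
  obtains i j z1 z2 where "(i, j) \<in> {0..<L^a} \<times> {0..<L^c}"
    "v = tor_pt (Suc k) (i * U1 + j * V1 + L^k * z1) (i * U2 + j * V2 + L^k * z2)"
proof -
  obtain m' w1 w2 where "v = tor_pt m' w1 w2" "Suc k \<le> m'" using ker_set_tor_pt_ge[OF v] by blast
  then obtain m where vm: "v = tor_pt (Suc m) w1 w2" "k \<le> m" by (metis Suc_le_D Suc_le_mono)
  have "tor_pt m w1 w2 \<in> ker_set l M" using v tor_pt_in_ker_lift_iff[OF M] vm by simp
  then obtain i j where ij: "(i, j) \<in> {0..<L^a} \<times> {0..<L^c}" "tor_comb k U1 U2 V1 V2 i j = tor_pt m w1 w2"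
    using ker_basis_obtain[OF basis] by metis
  have "tor_pt m w1 w2 = tor_pt m (L^(m-k) * (i * U1 + j * V1)) (L^(m-k) * (i * U2 + j * V2))"
    using ij(2) tor_pt_shift_le[OF vm(2)] unfolding tor_comb_def by simp
  then have "[w1 = L^(m-k) * (i * U1 + j * V1)] (mod L^m)" "[w2 = L^(m-k) * (i * U2 + j * V2)] (mod L^m)"
    unfolding tor_pt_eq_iff by auto
  then obtain z1 z2 where z1: "w1 = L^(m-k) * (i * U1 + j * V1) + L^m * z1"
    and z2: "w2 = L^(m-k) * (i * U2 + j * V2) + L^m * z2"
    using cong_obtain by metis
  have pm: "L^m = L^(m-k) * L^k" using vm(2) by (simp flip: power_add)
  have "tor_pt (Suc k) (i * U1 + j * V1 + L^k * z1) (i * U2 + j * V2 + L^k * z2)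
      = tor_pt (Suc k + (m - k)) (L^(m-k) * (i * U1 + j * V1 + L^k * z1)) (L^(m-k) * (i * U2 + j * V2 + L^k * z2))"
    by (rule tor_pt_shift)
  also have "\<dots> = v"
  proof -
    have "Suc k + (m - k) = Suc m" using vm(2) by simp
    moreover have "L^(m-k) * (i * U1 + j * V1 + L^k * z1) = w1" "L^(m-k) * (i * U2 + j * V2 + L^k * z2) = w2"
      unfolding z1 z2 pm by (simp_all add: algebra_simps)
    ultimately show ?thesis using vm(1) by simp
  qed
  finally show ?thesis using that ij(1) by metis
qed

lemma ker_basis_lift:
  assumes M: "M \<in> Zl_mats l" and a: "1 \<le> a" "a \<le> c" and k: "1 \<le> k"
    and basis: "ker_basis a c k U1 U2 V1 V2 (ker_set l M)"
  shows "ker_basis (Suc a) (Suc c) (Suc k) U1 U2 V1 V2 (ker_set l (lift M))"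
proof -
  let ?F = "tor_comb (Suc k) U1 U2 V1 V2"
  note c = ker_basisD(1-4)[OF basis]
  have c': "[L^Suc a * U1 = 0] (mod L^Suc k)" "[L^Suc a * U2 = 0] (mod L^Suc k)"
     "[L^Suc c * V1 = 0] (mod L^Suc k)" "[L^Suc c * V2 = 0] (mod L^Suc k)"
    using cong_mult_L[OF c(1)] cong_mult_L[OF c(2)] cong_mult_L[OF c(3)] cong_mult_L[OF c(4)]
    by (simp_all add: mult.assoc)
  have "1 \<le> c" using a by simp
  then have inj: "inj_on (\<lambda>(i, j). ?F i j) ({0..<L^Suc a} \<times> {0..<L^Suc c})"
    by (intro inj_on_tor_comb_box ker_basis_lift_tor_comb_zero[OF basis a(1)])
  have "?F i j \<in> ker_set l (lift M)" for i j
    using tor_comb_in_ker_basis[OF basis] tor_pt_in_ker_lift_iff[OF M] unfolding tor_comb_def by simp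
  moreover have "ker_set l (lift M) \<subseteq> (\<lambda>(i, j). ?F i j) ` ({0..<L^Suc a} \<times> {0..<L^Suc c})"
  proof
    fix v assume "v \<in> ker_set l (lift M)"
    then obtain i j z1 z2 where ij: "(i, j) \<in> {0..<L^a} \<times> {0..<L^c}"
      and v: "v = tor_pt (Suc k) (i * U1 + j * V1 + L^k * z1) (i * U2 + j * V2 + L^k * z2)"
      using ker_set_lift_decomp[OF M basis] by blast
    obtain s r where sr: "s \<in> {0..<L}" "r \<in> {0..<L}"
      and z: "[L^k * z1 = L^a * s * U1 + L^c * r * V1] (mod L^Suc k)"
        "[L^k * z2 = L^a * s * U2 + L^c * r * V2] (mod L^Suc k)"
      using ker_basis_lift_torsion_1[OF basis a k] by blast
    have "(i + L^a * s) * U1 + (j + L^c * r) * V1 = (i * U1 + j * V1) + (L^a * s * U1 + L^c * r * V1)"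
      "(i + L^a * s) * U2 + (j + L^c * r) * V2 = (i * U2 + j * V2) + (L^a * s * U2 + L^c * r * V2)"
      by (simp_all add: algebra_simps)
    then have "[i * U1 + j * V1 + L^k * z1 = (i + L^a * s) * U1 + (j + L^c * r) * V1] (mod L^Suc k)"
      "[i * U2 + j * V2 + L^k * z2 = (i + L^a * s) * U2 + (j + L^c * r) * V2] (mod L^Suc k)"
      using cong_add[OF cong_refl z(1)] cong_add[OF cong_refl z(2)] by simp_all
    then have "v = ?F (i + L^a * s) (j + L^c * r)"
      unfolding v tor_comb_def tor_pt_eq_iff by blast
    moreover have "(i + L^a * s, j + L^c * r) \<in> {0..<L^Suc a} \<times> {0..<L^Suc c}"
      using ij sr add_mult_digit_bound[of i "L^a" s L] add_mult_digit_bound[of j "L^c" r L]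
      by (auto simp: mult.commute)
    ultimately show "v \<in> (\<lambda>(i, j). ?F i j) ` ({0..<L^Suc a} \<times> {0..<L^Suc c})" by force
  qed
  ultimately have "bij_betw (\<lambda>(i, j). ?F i j) ({0..<L^Suc a} \<times> {0..<L^Suc c}) (ker_set l (lift M))"
    using inj by (intro bij_betw_imageI) auto
  then show ?thesis unfolding ker_basis_def using c' by blast
qed

lemma tor_pt_Suc_cancel:
  assumes "k \<le> m" and eq: "tor_pt (Suc m) w1 w2 = tor_pt (Suc k) x1 x2"
  shows "tor_pt m w1 w2 = tor_pt k x1 x2"
proof -
  have "tor_pt (Suc k) x1 x2 = tor_pt (Suc m) (L^(m-k) * x1) (L^(m-k) * x2)"
    using tor_pt_shift[of "Suc k" _ _ "m - k"] assms(1) by simp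
  then have "tor_pt (Suc m) w1 w2 = tor_pt (Suc m) (L^(m-k) * x1) (L^(m-k) * x2)" using eq by simp
  then have "[w1 = L^(m-k) * x1] (mod L^Suc m)" "[w2 = L^(m-k) * x2] (mod L^Suc m)"
    unfolding tor_pt_eq_iff by auto
  then have "[w1 = L^(m-k) * x1] (mod L^m)" "[w2 = L^(m-k) * x2] (mod L^m)"
    by (auto intro: cong_dvd_modulus[of _ _ "L^Suc m"])
  then have "tor_pt m w1 w2 = tor_pt m (L^(m-k) * x1) (L^(m-k) * x2)" unfolding tor_pt_eq_iff by simp
  then show ?thesis using tor_pt_shift_le[OF assms(1), of x1 x2] by simp
qed

lemma ker_basis_unlift:
  assumes M: "M \<in> Zl_mats l"
    and basis: "ker_basis (Suc a) (Suc c) (Suc k) U1 U2 V1 V2 (ker_set l (lift M))"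
  shows "ker_basis a c k U1 U2 V1 V2 (ker_set l M)"
proof -
  let ?F = "tor_comb k U1 U2 V1 V2"
  have c: "[L^a * U1 = 0] (mod L^k)" "[L^a * U2 = 0] (mod L^k)" "[L^c * V1 = 0] (mod L^k)" "[L^c * V2 = 0] (mod L^k)"
    using ker_basisD(1-4)[OF basis] cong_cancel_L[of "L^a * U1" 0 k] cong_cancel_L[of "L^a * U2" 0 k]
      cong_cancel_L[of "L^c * V1" 0 k] cong_cancel_L[of "L^c * V2" 0 k]
    by (simp_all add: mult.assoc)
  have "L^a dvd x \<and> L^c dvd y" if "?F x y = ?F 0 0" for x y
  proof -
    have "[x * U1 + y * V1 = 0] (mod L^k)" "[x * U2 + y * V2 = 0] (mod L^k)"
      using that unfolding tor_comb_def tor_pt_eq_iff by auto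
    then have "[L * (x * U1 + y * V1) = 0] (mod L^Suc k)" "[L * (x * U2 + y * V2) = 0] (mod L^Suc k)"
      by (simp_all add: cong_0_iff mult_dvd_mono)
    then have "tor_comb (Suc k) U1 U2 V1 V2 (L * x) (L * y) = tor_comb (Suc k) U1 U2 V1 V2 0 0"
      unfolding tor_comb_def tor_pt_eq_iff by (simp add: algebra_simps)
    then have "L^Suc a dvd L * x \<and> L^Suc c dvd L * y" by (rule ker_basis_tor_comb_zero[OF basis])
    then show ?thesis using l_ge_2 by simp
  qed
  then have inj: "inj_on (\<lambda>(i, j). ?F i j) ({0..<L^a} \<times> {0..<L^c})" by (rule inj_on_tor_comb_box)
  have "?F i j \<in> ker_set l M" for i j
    using tor_comb_in_ker_basis[OF basis] tor_pt_in_ker_lift_iff[OF M] unfolding tor_comb_def by simp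
  moreover have "ker_set l M \<subseteq> (\<lambda>(i, j). ?F i j) ` ({0..<L^a} \<times> {0..<L^c})"
  proof
    fix v assume v: "v \<in> ker_set l M"
    obtain m w1 w2 where vm: "v = tor_pt m w1 w2" "k \<le> m" using ker_set_tor_pt_ge[OF v] by blast
    have "tor_pt (Suc m) w1 w2 \<in> ker_set l (lift M)" using v tor_pt_in_ker_lift_iff[OF M] vm by simp
    then obtain i j where "tor_comb (Suc k) U1 U2 V1 V2 i j = tor_pt (Suc m) w1 w2"
      using ker_basis_obtain[OF basis] by metis
    then have "v = ?F i j" using tor_pt_Suc_cancel[OF vm(2)] unfolding vm(1) tor_comb_def by metis
    then have "v = ?F (i mod L^a) (j mod L^c)" using tor_comb_mod[OF c] by simp
    moreover have "(i mod L^a, j mod L^c) \<in> {0..<L^a} \<times> {0..<L^c}" using L_pow_pos by auto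
    ultimately show "v \<in> (\<lambda>(i, j). ?F i j) ` ({0..<L^a} \<times> {0..<L^c})" by force
  qed
  ultimately have "bij_betw (\<lambda>(i, j). ?F i j) ({0..<L^a} \<times> {0..<L^c}) (ker_set l M)"
    using inj by (intro bij_betw_imageI) auto
  then show ?thesis unfolding ker_basis_def using c by blast
qed

lemma lift_mat_lin: "lift_mat A = madd (msc L A) (msc (-(L-1)) (1,0,0,1))"
  by (cases A) (simp add: lift_mat_def msc_simp madd_simp algebra_simps)

lemma mmul_lift_mat_left: "mmul (lift_mat B) D = madd (msc L (mmul B D)) (msc (-(L-1)) D)"
  by (cases B; cases D) (simp add: lift_mat_def mmul_simp msc_simp madd_simp algebra_simps)

lemma mmul_lift_mat_right: "mmul D (lift_mat B) = madd (msc L (mmul D B)) (msc (-(L-1)) D)"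
  by (cases B; cases D) (simp add: lift_mat_def mmul_simp msc_simp madd_simp algebra_simps)

lemma mmul_lift_mat_mid: "mmul (mmul A (lift_mat B)) D = madd (msc L (mmul (mmul A B) D)) (msc (-(L-1)) (mmul A D))"
  by (cases A; cases B; cases D) (simp add: lift_mat_def mmul_simp msc_simp madd_simp algebra_simps)

lemma mmod_madd_msc_L_cancel:
  assumes "mmod (L^Suc n) (madd (msc L X) Z) = mmod (L^Suc n) (madd (msc L X') Z)"
  shows "mmod (L^n) X = mmod (L^n) X'"
proof (cases X; cases X'; cases Z)
  fix a1 a2 a3 a4 b1 b2 b3 b4 c1 c2 c3 c4
  assume h: "X = (a1,a2,a3,a4)" "X' = (b1,b2,b3,b4)" "Z = (c1,c2,c3,c4)"
  have q: "[L * x + z = L * y + z] (mod L^Suc n) \<Longrightarrow> [x = y] (mod L^n)" for x y z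
    by (rule cong_cancel_L) (simp add: cong_add_rcancel)
  from assms show ?thesis unfolding h msc_simp madd_simp mmod_eq_iff using q by blast
qed

lemma lift_level_1:
  assumes M: "M \<in> Zl_mats l"
  shows "lift M 1 = (1,0,0,1)"
proof -
  have "lift M 1 = mmod L (lift_mat (M 1))" unfolding lift_def by simp
  also have "\<dots> = (1,0,0,1)" using l_ge_2 by (cases "M 1") (simp add: lift_mat_def mmod_simp)
  finally show ?thesis .
qed

lemma GL2_of_level_1_one:
  assumes M: "M \<in> Zl_mats l" and "M 1 = (1,0,0,1)"
  shows "M \<in> GL2 l"
  using GL2_of_coprime_det[OF M] assms(2) by (simp add: det4_def)

lemma lift_GL2: "M \<in> Zl_mats l \<Longrightarrow> lift M \<in> GL2 l"
  using GL2_of_level_1_one lift_Zl_mats lift_level_1 by blast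

lemma lift_mat_inj:
  assumes "mmod (L^Suc n) (lift_mat A) = mmod (L^Suc n) (lift_mat B)"
  shows "mmod (L^n) A = mmod (L^n) B"
  using assms unfolding lift_mat_lin by (rule mmod_madd_msc_L_cancel)

lemma lift_cong_one:
  assumes M: "M \<in> Zl_mats l" and a: "a \<ge> 1" and Ma: "M a = lone l a"
  shows "lift M (Suc a) = lone l (Suc a)"
proof -
  have "lift M (Suc a) = mmod (L^Suc a) (lift_mat (1,0,0,1))" using lift_level[OF M] Ma lone_level a by simp
  then show ?thesis unfolding lone_def lift_mat_def by simp
qed

lemma lift_commute_iff:
  assumes Y: "Y \<in> Zl_mats l" and W: "W \<in> Zl_mats l"
  shows "lmult l (lift Y) W = lmult l W (lift Y) \<longleftrightarrow> lmult l Y W = lmult l W Y"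
proof -
  have lv: "lmult l (lift Y) W n = mmod (L^n) (madd (msc L (mmul (Y n) (W n))) (msc (-(L-1)) (W n)))"
       "lmult l W (lift Y) n = mmod (L^n) (madd (msc L (mmul (W n) (Y n))) (msc (-(L-1)) (W n)))" for n
    unfolding lmult_def lift_def by (simp_all add: mmod_mmul_left mmod_mmul_right mmul_lift_mat_left mmul_lift_mat_right)
  show ?thesis
  proof
    assume cw: "lmult l (lift Y) W = lmult l W (lift Y)"
    show "lmult l Y W = lmult l W Y"
    proof
      fix n
      have "mmod (L^Suc n) (madd (msc L (mmul (Y (Suc n)) (W (Suc n)))) (msc (-(L-1)) (W (Suc n))))
          = mmod (L^Suc n) (madd (msc L (mmul (W (Suc n)) (Y (Suc n)))) (msc (-(L-1)) (W (Suc n))))"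
        using cw unfolding lv[symmetric] by simp
      then have e: "mmod (L^n) (mmul (Y (Suc n)) (W (Suc n))) = mmod (L^n) (mmul (W (Suc n)) (Y (Suc n)))"
        by (rule mmod_madd_msc_L_cancel)
      have "lmult l Y W n = mmod (L^n) (mmul (Y (Suc n)) (W (Suc n)))"
        unfolding lmult_def Zl_matsD[OF Y, of n] Zl_matsD[OF W, of n] by (simp add: mmod_mmul_left mmod_mmul_right)
      also have "\<dots> = mmod (L^n) (mmul (W (Suc n)) (Y (Suc n)))" by (rule e)
      also have "\<dots> = lmult l W Y n"
        unfolding lmult_def Zl_matsD[OF Y, of n] Zl_matsD[OF W, of n] by (simp add: mmod_mmul_left mmod_mmul_right)
      finally show "lmult l Y W n = lmult l W Y n" .
    qed
  next
    assume cw: "lmult l Y W = lmult l W Y"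
    show "lmult l (lift Y) W = lmult l W (lift Y)"
    proof
      fix n
      have e: "mmod (L^n) (mmul (Y n) (W n)) = mmod (L^n) (mmul (W n) (Y n))"
        using cw unfolding lmult_def by meson
      show "lmult l (lift Y) W n = lmult l W (lift Y) n"
        unfolding lv by (rule mmod_lin_cong[OF e refl])
    qed
  qed
qed

definition unlift_mat :: "mat4 \<Rightarrow> mat4" where
  "unlift_mat = (\<lambda>(a,b,c,e). (1 + (a - 1) div L, b div L, c div L, 1 + (e - 1) div L))"

text \<open>\<open>(N - I)/l\<close> modulo \<open>l\<^sup>n\<close> is determined by \<open>N\<close> modulo \<open>l\<^sup>n\<^sup>+\<^sup>1\<close>, hence the index shift.\<close>

definition unlift :: "ladic_mat \<Rightarrow> ladic_mat" where
  "unlift N = (\<lambda>n. mmod (L^n) (unlift_mat (N (Suc n))))"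

definition one_mod_l :: "mat4 \<Rightarrow> bool" where
  "one_mod_l A \<longleftrightarrow> (case A of (a,b,c,e) \<Rightarrow> L dvd (a - 1) \<and> L dvd b \<and> L dvd c \<and> L dvd (e - 1))"

lemma one_mod_l_level:
  assumes N: "N \<in> Zl_mats l" and N1: "N 1 = (1,0,0,1)" and n: "n \<ge> 1"
  shows "one_mod_l (N n)"
proof -
  obtain a b c e where Nn: "N n = (a,b,c,e)" by (cases "N n")
  have "N 1 = mmod (L^1) (N n)" using Zl_mats_le[OF N n] .
  then have m: "a mod L = 1" "b mod L = 0" "c mod L = 0" "e mod L = 0 + 1" using N1 Nn by (simp_all add: mmod_simp)
  have l1: "1 mod L = 1" using l_ge_2 by simp
  have "[a = 1] (mod L)" "[e = 1] (mod L)" using m l1 unfolding cong_def by simp_all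
  then have "L dvd a - 1" "L dvd e - 1" by (simp_all add: cong_iff_dvd_diff)
  moreover have "L dvd b" "L dvd c" using m by (simp_all add: dvd_eq_mod_eq_0)
  ultimately show ?thesis unfolding one_mod_l_def Nn by simp
qed

lemma lift_mat_unlift_mat: "one_mod_l A \<Longrightarrow> lift_mat (unlift_mat A) = A"
  unfolding one_mod_l_def lift_mat_def unlift_mat_def by (cases A) auto

lemma cong_div_L:
  assumes "L dvd u" "L dvd v" "[u = v] (mod L^Suc n)"
  shows "[u div L = v div L] (mod L^n)"
proof -
  obtain u' v' where uv: "u = L * u'" "v = L * v'" using assms(1,2) by (meson dvdE)
  have "L \<noteq> 0" using l_ge_2 by simp
  then show ?thesis using assms(3) unfolding uv by (simp add: cong_cancel_L)
qed

lemma unlift_mat_cong: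
  assumes "one_mod_l A" "one_mod_l B" "mmod (L^Suc n) A = mmod (L^Suc n) B"
  shows "mmod (L^n) (unlift_mat A) = mmod (L^n) (unlift_mat B)"
proof (cases A; cases B)
  fix a b c e a' b' c' e' assume A: "A = (a,b,c,e)" and B: "B = (a',b',c',e')"
  from assms(3) have h: "[a = a'] (mod L^Suc n)" "[b = b'] (mod L^Suc n)" "[c = c'] (mod L^Suc n)" "[e = e'] (mod L^Suc n)"
    unfolding A B mmod_eq_iff by auto
  have h1: "[a - 1 = a' - 1] (mod L^Suc n)" "[e - 1 = e' - 1] (mod L^Suc n)" using h by (auto intro: cong_diff)
  have d: "L dvd (a - 1)" "L dvd b" "L dvd c" "L dvd (e - 1)" "L dvd (a' - 1)" "L dvd b'" "L dvd c'" "L dvd (e' - 1)"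
    using assms(1,2) unfolding A B one_mod_l_def by auto
  have "[(a - 1) div L = (a' - 1) div L] (mod L^n)" "[b div L = b' div L] (mod L^n)"
    "[c div L = c' div L] (mod L^n)" "[(e - 1) div L = (e' - 1) div L] (mod L^n)"
    using cong_div_L d h h1 by blast+
  then show ?thesis unfolding A B unlift_mat_def split mmod_eq_iff by (intro conjI) (auto intro: cong_add[OF cong_refl])
qed

lemma unlift_Zl_mats:
  assumes N: "N \<in> Zl_mats l" and N1: "N 1 = (1,0,0,1)"
  shows "unlift N \<in> Zl_mats l"
  unfolding Zl_mats_def
proof (intro CollectI allI)
  fix n
  have "mmod (L^n) (unlift N (Suc n)) = mmod (L^n) (unlift_mat (N (Suc (Suc n))))"
    unfolding unlift_def by (rule mmod_dvd) simp
  also have "\<dots> = mmod (L^n) (unlift_mat (N (Suc n)))"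
    using unlift_mat_cong[OF one_mod_l_level[OF N N1, of "Suc (Suc n)"] one_mod_l_level[OF N N1, of "Suc n"], of n]
      Zl_matsD[OF N, of "Suc n"] Zl_mats_mmod[OF N, of "Suc n"] by simp
  finally show "unlift N n = mmod (L^n) (unlift N (Suc n))" unfolding unlift_def by simp
qed

lemma lift_unlift:
  assumes N: "N \<in> Zl_mats l" and N1: "N 1 = (1,0,0,1)"
  shows "lift (unlift N) = N"
proof
  fix n
  have "lift (unlift N) n = mmod (L^n) (lift_mat (mmod (L^n) (unlift_mat (N (Suc n)))))" unfolding lift_def unlift_def ..
  also have "\<dots> = mmod (L^n) (mmod (L^Suc n) (lift_mat (mmod (L^n) (unlift_mat (N (Suc n))))))"
    by (rule mmod_dvd[symmetric]) simp
  also have "\<dots> = mmod (L^n) (mmod (L^Suc n) (lift_mat (unlift_mat (N (Suc n)))))"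
    using lift_mat_cong[of n "mmod (L^n) (unlift_mat (N (Suc n)))" "unlift_mat (N (Suc n))"] by simp
  also have "\<dots> = mmod (L^n) (N (Suc n))" using lift_mat_unlift_mat[OF one_mod_l_level[OF N N1, of "Suc n"]] by (simp add: mmod_dvd)
  also have "\<dots> = N n" using Zl_matsD[OF N, of n] by simp
  finally show "lift (unlift N) n = N n" .
qed

lemma unlift_cong_one:
  assumes a: "a \<ge> 1" and Na: "N (Suc a) = lone l (Suc a)"
  shows "unlift N a = lone l a"
  using Na lone_level[of "Suc a"] unfolding unlift_def lone_def by (simp add: unlift_mat_def)

lemma unlift_level_1:
  assumes "N 2 = (1,0,0,1)"
  shows "unlift N 1 = (1,0,0,1)"
  using assms l_ge_2 unfolding unlift_def by (simp add: unlift_mat_def mmod_simp numeral_2_eq_2)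

end

locale cartan_setting = ell_adic +
  fixes t d :: "nat \<Rightarrow> int" and P :: ladic_mat and C :: "ladic_mat set"
  assumes t: "t \<in> Zl l" and d: "d \<in> Zl l" and P: "P \<in> GL2 l"
    and C_def: "C = {M \<in> GL2 l. \<exists>x \<in> Zl l. \<exists>y \<in> Zl l.
                              lmult l P M = lmult l (quad_elt l t d x y) P}"
begin

interpretation Mo: monoid "mat_monoid l" by (rule monoid_mat_monoid)

definition P_inv :: ladic_mat where
  "P_inv = inv\<^bsub>mat_monoid l\<^esub> P"

definition w_mat :: ladic_mat where
  "w_mat = quad_elt l t d (zseq l 0) (zseq l 1)"

lemma P_Zl_mats: "P \<in> Zl_mats l" using P unfolding GL2_def by blast

lemma P_inv_props: "P_inv \<in> Zl_mats l" "lmult l P P_inv = lone l" "lmult l P_inv P = lone l" "P_inv \<in> GL2 l"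
proof -
  have U: "P \<in> Units (mat_monoid l)" using P by (simp add: GL2_Units)
  show "P_inv \<in> Zl_mats l" using Mo.Units_inv_closed[OF U] unfolding P_inv_def by simp
  show "lmult l P P_inv = lone l" using Mo.Units_r_inv[OF U] unfolding P_inv_def by simp
  show "lmult l P_inv P = lone l" using Mo.Units_l_inv[OF U] unfolding P_inv_def by simp
  show "P_inv \<in> GL2 l" using Mo.Units_inv_Units[OF U] unfolding P_inv_def GL2_Units by simp
qed

lemma w_mat_Zl_mats: "w_mat \<in> Zl_mats l" unfolding w_mat_def by (rule quad_elt_Zl_mats[OF t d zseq_Zl zseq_Zl])

definition conjP :: "ladic_mat \<Rightarrow> ladic_mat" where
  "conjP M = lmult l (lmult l P M) P_inv"

lemma quad_elt_commutes_w:
  assumes "x \<in> Zl l" "y \<in> Zl l"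
  shows "lmult l (quad_elt l t d x y) w_mat = lmult l w_mat (quad_elt l t d x y)"
proof
  fix n
  show "lmult l (quad_elt l t d x y) w_mat n = lmult l w_mat (quad_elt l t d x y) n"
    unfolding lmult_def quad_elt_def w_mat_def zseq_def
    by (simp add: mmod_mmul_left mmod_mmul_right del: mmod_mmod)
       (simp add: mmul_simp mmod_simp algebra_simps mod_simps)
qed

lemma P_inv_cancel: "Z \<in> Zl_mats l \<Longrightarrow> lmult l P_inv (lmult l P Z) = Z"
         "Z \<in> Zl_mats l \<Longrightarrow> lmult l P (lmult l P_inv Z) = Z"
proof -
  assume Z: "Z \<in> Zl_mats l"
  have "lmult l P_inv (lmult l P Z) = lmult l (lmult l P_inv P) Z" by (simp only: lmult_assoc)
  then show "lmult l P_inv (lmult l P Z) = Z" using P_inv_props(3) lone_left[OF Z] by simp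
next
  assume Z: "Z \<in> Zl_mats l"
  have "lmult l P (lmult l P_inv Z) = lmult l (lmult l P P_inv) Z" by (simp only: lmult_assoc)
  then show "lmult l P (lmult l P_inv Z) = Z" using P_inv_props(2) lone_left[OF Z] by simp
qed

lemma w_mat_level: "w_mat n = mmod (L ^ n) (0, - d n, 1, t n)"
proof -
  have h: "[x * (1 mod m) = x] (mod m)" for x m :: int
    unfolding cong_def by (metis mod_mult_right_eq mult.right_neutral)
  have h0: "[x mod m = x] (mod m)" for x m :: int unfolding cong_def by simp
  have "w_mat n = mmod (L^n) (0 mod L^n, - (d n * (1 mod L^n)), 1 mod L^n, 0 mod L^n + t n * (1 mod L^n))"
    unfolding w_mat_def quad_elt_def zseq_def by simp
  also have "\<dots> = mmod (L ^ n) (0, - d n, 1, t n)"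
    unfolding mmod_eq_iff
    using h0 h cong_minus_minus_iff cong_add by (metis add_0)
  finally show ?thesis .
qed

lemma conjP_Zl_mats: "M \<in> Zl_mats l \<Longrightarrow> conjP M \<in> Zl_mats l"
  unfolding conjP_def by (rule lmult_closed[OF lmult_closed[OF P_Zl_mats] P_inv_props(1)])

definition commutes_w :: "ladic_mat \<Rightarrow> bool" where
  "commutes_w X \<longleftrightarrow> lmult l X w_mat = lmult l w_mat X"

text \<open>An endomorphism commuting with multiplication by \<open>w\<close> is multiplication by the element
  \<open>x + y w\<close> given by its first column.\<close>

lemma commutes_w_quad_elt:
  assumes "X \<in> Zl_mats l" "commutes_w X"
  shows "X = quad_elt l t d (\<lambda>n. fst (X n)) (\<lambda>n. fst (snd (snd (X n))))"
proof
  fix n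
  obtain a b c e where Xn: "X n = (a,b,c,e)" by (cases "X n")
  have norm: "mmod (L^n) (X n) = X n" by (rule Zl_mats_mmod[OF assms(1)])
  have "mmod (L^n) (mmul (X n) (w_mat n)) = mmod (L^n) (mmul (w_mat n) (X n))"
    using assms(2) unfolding commutes_w_def lmult_def by meson
  then have "mmod (L^n) (mmul (X n) (0, - d n, 1, t n)) = mmod (L^n) (mmul (0, - d n, 1, t n) (X n))"
    unfolding w_mat_level by (simp add: mmod_mmul_left mmod_mmul_right)
  then have e: "[b = - (d n * c)] (mod L^n)" "[e = a + t n * c] (mod L^n)"
    unfolding Xn mmul_simp mmod_eq_iff by (simp_all add: algebra_simps)
  have "quad_elt l t d (\<lambda>n. fst (X n)) (\<lambda>n. fst (snd (snd (X n)))) n = mmod (L^n) (a, - (d n * c), c, a + t n * c)"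
    unfolding quad_elt_def Xn by simp
  also have "\<dots> = mmod (L^n) (a,b,c,e)"
    unfolding mmod_eq_iff using e by (simp add: cong_sym)
  finally show "X n = quad_elt l t d (\<lambda>n. fst (X n)) (\<lambda>n. fst (snd (snd (X n)))) n"
    using norm Xn by simp
qed

lemma C_iff: "M \<in> C \<longleftrightarrow> M \<in> GL2 l \<and> commutes_w (conjP M)"
proof
  assume "M \<in> C"
  then obtain x y where M: "M \<in> GL2 l" "x \<in> Zl l" "y \<in> Zl l" "lmult l P M = lmult l (quad_elt l t d x y) P"
    unfolding C_def by blast
  have Q: "quad_elt l t d x y \<in> Zl_mats l" by (rule quad_elt_Zl_mats[OF t d M(2,3)])
  have "conjP M = quad_elt l t d x y"
    unfolding conjP_def M(4) using P_inv_props Q by (simp add: lmult_assoc lone_right)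
  then show "M \<in> GL2 l \<and> commutes_w (conjP M)" using M quad_elt_commutes_w unfolding commutes_w_def by simp
next
  assume M: "M \<in> GL2 l \<and> commutes_w (conjP M)"
  have MZ: "M \<in> Zl_mats l" using M GL2_Zl_mats by blast
  define X where "X = conjP M"
  have XZ: "X \<in> Zl_mats l" unfolding X_def by (rule conjP_Zl_mats[OF MZ])
  have xy: "(\<lambda>n. fst (X n)) \<in> Zl l" "(\<lambda>n. fst (snd (snd (X n)))) \<in> Zl l" by (rule Zl_mats_entries_Zl[OF XZ])+
  have XQ: "X = quad_elt l t d (\<lambda>n. fst (X n)) (\<lambda>n. fst (snd (snd (X n))))"
    using commutes_w_quad_elt[OF XZ] M unfolding X_def by blast
  have "lmult l X P = lmult l P M"
    unfolding X_def conjP_def using P_inv_props P_Zl_mats MZ by (simp add: lmult_assoc lone_right lmult_closed)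
  then have "lmult l P M = lmult l (quad_elt l t d (\<lambda>n. fst (X n)) (\<lambda>n. fst (snd (snd (X n))))) P"
    using XQ by simp
  then show "M \<in> C" unfolding C_def using M xy by blast
qed

lemma commutes_w_mult:
  assumes "X \<in> Zl_mats l" "Y \<in> Zl_mats l" "commutes_w X" "commutes_w Y"
  shows "commutes_w (lmult l X Y)"
proof -
  have "lmult l (lmult l X Y) w_mat = lmult l X (lmult l Y w_mat)" by (simp add: lmult_assoc)
  also have "\<dots> = lmult l X (lmult l w_mat Y)" using assms(4) unfolding commutes_w_def by simp
  also have "\<dots> = lmult l (lmult l X w_mat) Y" by (simp add: lmult_assoc)
  also have "\<dots> = lmult l (lmult l w_mat X) Y" using assms(3) unfolding commutes_w_def by simp
  also have "\<dots> = lmult l w_mat (lmult l X Y)" by (simp add: lmult_assoc)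
  finally show ?thesis unfolding commutes_w_def .
qed

lemma conjP_mult:
  assumes "M \<in> Zl_mats l" "N \<in> Zl_mats l"
  shows "conjP (lmult l M N) = lmult l (conjP M) (conjP N)"
  unfolding conjP_def using assms P_inv_props P_Zl_mats by (simp add: lmult_assoc P_inv_cancel(1) lmult_closed)

lemma C_GL2: "C \<subseteq> GL2 l" unfolding C_def by blast
lemma C_Zl_mats: "M \<in> C \<Longrightarrow> M \<in> Zl_mats l" using C_GL2 GL2_Zl_mats by blast

lemma C_mult: "M \<in> C \<Longrightarrow> N \<in> C \<Longrightarrow> lmult l M N \<in> C"
proof -
  assume a: "M \<in> C" "N \<in> C"
  then have g: "M \<in> GL2 l" "N \<in> GL2 l" "commutes_w (conjP M)" "commutes_w (conjP N)" unfolding C_iff by auto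
  then have z: "M \<in> Zl_mats l" "N \<in> Zl_mats l" using GL2_Zl_mats by auto
  show ?thesis unfolding C_iff conjP_mult[OF z]
    using GL2_mult[OF g(1,2)] commutes_w_mult[OF conjP_Zl_mats[OF z(1)] conjP_Zl_mats[OF z(2)] g(3,4)] by simp
qed

lemma C_inv:
  assumes "M \<in> C" "N \<in> Zl_mats l" "lmult l M N = lone l" "lmult l N M = lone l"
  shows "N \<in> C"
proof -
  have MZ: "M \<in> Zl_mats l" by (rule C_Zl_mats[OF assms(1)])
  have NG: "N \<in> GL2 l" unfolding GL2_def using assms MZ by blast
  have "lmult l (conjP M) (conjP N) = conjP (lone l)" using conjP_mult[OF MZ assms(2)] assms(3) by simp
  moreover have "lmult l (conjP N) (conjP M) = conjP (lone l)" using conjP_mult[OF assms(2) MZ] assms(4) by simp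
  moreover have "conjP (lone l) = lone l" unfolding conjP_def using P_inv_props P_Zl_mats by (simp add: lone_right)
  ultimately have i: "lmult l (conjP M) (conjP N) = lone l" "lmult l (conjP N) (conjP M) = lone l" by simp_all
  have "commutes_w (conjP N)"
    using monoid_inv_commute[OF monoid_mat_monoid, where x="conjP M" and y="conjP N" and w=w_mat] i assms(1)
      conjP_Zl_mats[OF MZ] conjP_Zl_mats[OF assms(2)] w_mat_Zl_mats
    unfolding C_iff commutes_w_def by simp
  then show ?thesis using NG C_iff by blast
qed

lemma lone_C: "lone l \<in> C"
proof -
  have "conjP (lone l) = lone l" unfolding conjP_def using P_inv_props P_Zl_mats by (simp add: lone_right)
  then show ?thesis unfolding C_iff commutes_w_def using lone_GL2 w_mat_Zl_mats lone_left lone_right by simp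
qed

definition cong_sub :: "nat \<Rightarrow> ladic_mat set" where
  "cong_sub n = {N \<in> C. N n = lone l n}"

definition quad_unit :: "nat \<Rightarrow> int \<Rightarrow> int \<Rightarrow> ladic_mat" where
  "quad_unit n x0 y0 = quad_elt l t d (zseq l (1 + L^n*x0)) (zseq l (L^n*y0))"

definition cong_unit :: "nat \<Rightarrow> int \<Rightarrow> int \<Rightarrow> ladic_mat" where
  "cong_unit n x0 y0 = lmult l (lmult l P_inv (quad_unit n x0 y0)) P"

lemma quad_unit_Zl_mats: "quad_unit n x0 y0 \<in> Zl_mats l" unfolding quad_unit_def by (rule quad_elt_Zl_mats[OF t d zseq_Zl zseq_Zl])

lemma quad_unit_level: "quad_unit n x0 y0 n = lone l n"
proof -
  have h: "[x * (L^n * y) = 0] (mod L^n)" for x y by (simp add: cong_def)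
  show ?thesis unfolding quad_unit_def quad_elt_def lone_def zseq_def mmod_eq_iff
    using h by (simp add: cong_def mod_simps)
qed

lemma cong_unit_Zl_mats: "cong_unit n x0 y0 \<in> Zl_mats l"
  unfolding cong_unit_def by (rule lmult_closed[OF lmult_closed[OF P_inv_props(1) quad_unit_Zl_mats] P_Zl_mats])

lemma conjP_cong_unit: "conjP (cong_unit n x0 y0) = quad_unit n x0 y0"
proof -
  have "conjP (cong_unit n x0 y0) = lmult l P (lmult l P_inv (lmult l (quad_unit n x0 y0) (lmult l P P_inv)))"
    unfolding conjP_def cong_unit_def by (simp add: lmult_assoc)
  also have "\<dots> = quad_unit n x0 y0" using quad_unit_Zl_mats P_inv_props(2) by (simp add: P_inv_cancel lone_right)
  finally show ?thesis .
qed

lemma conjP_level: "conjP M k = mmod (L^k) (mmul (mmul (P k) (M k)) (P_inv k))"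
  unfolding conjP_def by (rule lmult3_level)

lemma cong_unit_level: "cong_unit n x0 y0 n = lone l n"
proof -
  have "cong_unit n x0 y0 n = mmod (L^n) (mmul (mmul (P_inv n) (lone l n)) (P n))"
    unfolding cong_unit_def lmult3_level quad_unit_level ..
  also have "\<dots> = mmod (L^n) (mmul (P_inv n) (P n))"
    unfolding lone_def mmod_mmul_mid by simp
  also have "\<dots> = lone l n" using P_inv_props(3) unfolding lmult_def by metis
  finally show ?thesis .
qed

lemma cong_sub_Zl_mats: "Q \<in> cong_sub n \<Longrightarrow> Q \<in> Zl_mats l" unfolding cong_sub_def using C_Zl_mats by blast

lemma cong_unit_in_cong_sub:
  assumes n: "n > 0"
  shows "cong_unit n x0 y0 \<in> cong_sub n"
proof -
  have "cong_unit n x0 y0 1 = mmod (L^1) (cong_unit n x0 y0 n)" using Zl_mats_le[OF cong_unit_Zl_mats, of 1 n] n by simp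
  also have "\<dots> = (1,0,0,1)" unfolding cong_unit_level lone_level[OF n] using l_ge_2 by (simp add: mmod_simp)
  finally have "coprime (det4 (cong_unit n x0 y0 1)) L" by (simp add: det4_def)
  then have g: "cong_unit n x0 y0 \<in> GL2 l" by (rule GL2_of_coprime_det[OF cong_unit_Zl_mats])
  have "commutes_w (conjP (cong_unit n x0 y0))"
    unfolding conjP_cong_unit quad_unit_def commutes_w_def by (rule quad_elt_commutes_w[OF zseq_Zl zseq_Zl])
  then show ?thesis unfolding cong_sub_def C_iff using g cong_unit_level by simp
qed

lemma mod_pow_Suc_digit:
  assumes "0 \<le> x" "x < L" "0 \<le> c" "c < L^n"
  shows "(c + L^n * x) mod L^Suc n = c + L^n * x"
proof -
  note that = assms(3,4)
  have "L^n * x \<le> L^n * (L - 1)" using assms L_pow_pos[of n] by (intro mult_left_mono) auto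
  then have "c + L^n * x < L^Suc n" using that by (simp add: algebra_simps)
  then show ?thesis using that assms L_pow_pos[of n] by (intro mod_pos_pos_trivial) auto
qed

lemma cong_unit_inj:
  assumes n: "n > 0" and x: "x0 \<in> {0..<L}" "y0 \<in> {0..<L}" "x1 \<in> {0..<L}" "y1 \<in> {0..<L}"
  and eq: "cong_unit n x0 y0 (Suc n) = cong_unit n x1 y1 (Suc n)"
  shows "x0 = x1 \<and> y0 = y1"
proof -
  have "conjP (cong_unit n x0 y0) (Suc n) = conjP (cong_unit n x1 y1) (Suc n)" unfolding conjP_level eq ..
  then have "quad_unit n x0 y0 (Suc n) = quad_unit n x1 y1 (Suc n)" unfolding conjP_cong_unit .
  then have e: "(1 + L^n*x0) mod L^Suc n = (1 + L^n*x1) mod L^Suc n"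
     "(L^n*y0) mod L^Suc n = (L^n*y1) mod L^Suc n"
    unfolding quad_unit_def quad_elt_def zseq_def by (simp_all add: mmod_simp)
  have "L ^ n \<ge> L" using l_ge_2 n by (simp add: self_le_power)
  then have "1 < L^n" using l_ge_2 by linarith
  then have "1 + L^n*x0 = 1 + L^n*x1"
    using e(1) mod_pow_Suc_digit[where x=x0 and c=1 and n=n] mod_pow_Suc_digit[where x=x1 and c=1 and n=n] x
    by simp
  moreover have "0 + L^n*y0 = 0 + L^n*y1"
    using e(2) mod_pow_Suc_digit[where x=y0 and c=0 and n=n] mod_pow_Suc_digit[where x=y1 and c=0 and n=n] x L_pow_pos[of n]
    by simp
  ultimately show ?thesis using l_ge_2 by simp
qed

lemma quad_elt_level_Suc_digits:
  assumes XZ: "X \<in> Zl_mats l" and cw: "commutes_w X" and Xn: "X n = (1, 0, 0, 1)"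
  obtains x0 y0 where "x0 \<in> {0..<L}" "y0 \<in> {0..<L}" "X (Suc n) = quad_unit n x0 y0 (Suc n)"
proof -
  obtain a b c e where XS: "X (Suc n) = (a, b, c, e)" by (cases "X (Suc n)")
  have "X n = mmod (L^n) (X (Suc n))" by (rule Zl_matsD[OF XZ])
  then have ac: "a mod L^n = 1" "c mod L^n = 0" using Xn XS by (simp_all add: mmod_simp)
  have rng: "0 \<le> a" "a < L * L^n" "0 \<le> c" "c < L * L^n"
    using Zl_mats_range[OF XZ, of "Suc n"] XS by auto
  define x0 where "x0 = a div L^n"
  define y0 where "y0 = c div L^n"
  have a: "a = 1 + L^n * x0" unfolding x0_def using ac(1) by (metis add.commute mult.commute mult_div_mod_eq)
  have c: "c = L^n * y0" unfolding y0_def using ac(2) by (metis add.right_neutral mult.commute mult_div_mod_eq)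
  have "x0 \<in> {0..<L}" "y0 \<in> {0..<L}"
    unfolding x0_def y0_def using rng L_pow_pos[of n]
    by (auto simp: pos_imp_zdiv_nonneg_iff int_div_less_of_less_mult)
  moreover have "quad_unit n x0 y0 (Suc n) = mmod (L^Suc n) (a, - (d (Suc n) * c), c, a + t (Suc n) * c)"
    using rng unfolding quad_unit_def quad_elt_def zseq_def a c by (simp add: mult.commute)
  moreover have "\<dots> = X (Suc n)"
    using fun_cong[OF commutes_w_quad_elt[OF XZ cw], of "Suc n"] unfolding quad_elt_def XS by simp
  ultimately show ?thesis using that by simp
qed

lemma red_cong_sub:
  assumes n: "n > 0"
  shows "red (cong_sub n) (Suc n) = (\<lambda>(x0, y0). cong_unit n x0 y0 (Suc n)) ` ({0..<L} \<times> {0..<L})"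
proof
  show "(\<lambda>(x0, y0). cong_unit n x0 y0 (Suc n)) ` ({0..<L} \<times> {0..<L}) \<subseteq> red (cong_sub n) (Suc n)"
    unfolding red_def using cong_unit_in_cong_sub[OF n] by auto
  show "red (cong_sub n) (Suc n) \<subseteq> (\<lambda>(x0, y0). cong_unit n x0 y0 (Suc n)) ` ({0..<L} \<times> {0..<L})"
  proof
    fix A assume "A \<in> red (cong_sub n) (Suc n)"
    then obtain Q where Q: "Q \<in> C" "Q n = lone l n" "A = Q (Suc n)" unfolding red_def cong_sub_def by blast
    have QZ: "Q \<in> Zl_mats l" by (rule C_Zl_mats[OF Q(1)])
    have "conjP Q n = mmod (L^n) (mmul (P n) (P_inv n))"
      unfolding conjP_level Q(2) lone_def mmod_mmul_mid by simp
    also have "\<dots> = (1, 0, 0, 1)" using P_inv_props(2) lone_level[OF n] unfolding lmult_def by metis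
    finally obtain x0 y0 where xy: "x0 \<in> {0..<L}" "y0 \<in> {0..<L}"
      and QS: "conjP Q (Suc n) = quad_unit n x0 y0 (Suc n)"
      using quad_elt_level_Suc_digits conjP_Zl_mats[OF QZ] Q(1) C_iff by metis
    have "lmult l (lmult l P_inv (conjP Q)) P = Q"
      unfolding conjP_def using QZ P_inv_props(3) by (simp add: lmult_assoc lone_right P_inv_cancel)
    then have "A = lmult l (lmult l P_inv (conjP Q)) P (Suc n)" using Q(3) by simp
    also have "\<dots> = cong_unit n x0 y0 (Suc n)" unfolding cong_unit_def lmult3_level QS ..
    finally show "A \<in> (\<lambda>(x0, y0). cong_unit n x0 y0 (Suc n)) ` ({0..<L} \<times> {0..<L})" using xy by force
  qed
qed

lemma card_red_cong_sub:
  assumes n: "n > 0"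
  shows "card (red (cong_sub n) (Suc n)) = l^2"
proof -
  have "inj_on (\<lambda>(x0,y0). cong_unit n x0 y0 (Suc n)) ({0..<L} \<times> {0..<L})"
    unfolding inj_on_def using cong_unit_inj[OF n] by auto
  then have "card (red (cong_sub n) (Suc n)) = card ({0..<L} \<times> {0..<L})" unfolding red_cong_sub[OF n] by (rule card_image)
  also have "\<dots> = l^2" by (simp add: card_cartesian_product power2_eq_square)
  finally show ?thesis .
qed

lemma cong_sub_antimono:
  assumes "j \<le> j'"
  shows "cong_sub j' \<subseteq> cong_sub j"
proof
  fix N assume "N \<in> cong_sub j'"
  then have N: "N \<in> C" "N j' = lone l j'" unfolding cong_sub_def by auto
  have "N j = mmod (L^j) (N j')" using Zl_mats_le[OF C_Zl_mats[OF N(1)] assms] .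
  also have "\<dots> = lone l j" unfolding N(2) using Zl_mats_le[OF lone_closed assms] by simp
  finally show "N \<in> cong_sub j" unfolding cong_sub_def using N by simp
qed

lemma same_level_imp_cong_sub:
  assumes M: "M \<in> C" and M': "M' \<in> C" and eq: "M n = M' n"
  obtains Q where "Q \<in> cong_sub n" "M = lmult l M' Q"
proof -
  obtain N where N: "N \<in> GL2 l" "lmult l M' N = lone l" "lmult l N M' = lone l"
    using GL2_inv C_GL2 M' by blast
  have NC: "N \<in> C" using C_inv[OF M' GL2_Zl_mats[OF N(1)] N(2,3)] .
  define Q where "Q = lmult l N M"
  have "Q n = lmult l N M' n" unfolding Q_def lmult_level eq ..
  then have "Q \<in> cong_sub n" unfolding cong_sub_def Q_def using N(3) C_mult[OF NC M] by simp
  moreover have "M = lmult l M' Q"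
    unfolding Q_def using N(2) lone_left[OF C_Zl_mats[OF M]] by (simp flip: lmult_assoc)
  ultimately show ?thesis using that by blast
qed

lemma conjP_lift:
  assumes X: "X \<in> Zl_mats l"
  shows "conjP (lift X) = lift (conjP X)"
proof
  fix n
  have "conjP (lift X) n = mmod (L^n) (mmul (mmul (P n) (lift_mat (X n))) (P_inv n))"
    unfolding conjP_level lift_def by (simp add: mmod_mmul_mid)
  also have "\<dots> = mmod (L^n) (madd (msc L (mmul (mmul (P n) (X n)) (P_inv n))) (msc (-(L-1)) (mmul (P n) (P_inv n))))"
    unfolding mmul_lift_mat_mid ..
  also have "\<dots> = mmod (L^n) (madd (msc L (conjP X n)) (msc (-(L-1)) (1,0,0,1)))"
  proof (rule mmod_lin_cong)
    show "mmod (L^n) (mmul (mmul (P n) (X n)) (P_inv n)) = mmod (L^n) (conjP X n)"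
      unfolding conjP_level by simp
    have "mmod (L^n) (mmul (P n) (P_inv n)) = lmult l P P_inv n" unfolding lmult_def ..
    also have "\<dots> = mmod (L^n) (1,0,0,1)" using P_inv_props(2) unfolding lone_def by simp
    finally show "mmod (L^n) (mmul (P n) (P_inv n)) = mmod (L^n) (1,0,0,1)" .
  qed
  also have "\<dots> = lift (conjP X) n" unfolding lift_def lift_mat_lin ..
  finally show "conjP (lift X) n = lift (conjP X) n" .
qed

lemma commutes_w_lift: "Y \<in> Zl_mats l \<Longrightarrow> commutes_w (lift Y) \<longleftrightarrow> commutes_w Y"
  unfolding commutes_w_def by (rule lift_commute_iff[OF _ w_mat_Zl_mats])

lemma lift_in_C:
  assumes M: "M \<in> C"
  shows "lift M \<in> C"
proof -
  have MZ: "M \<in> Zl_mats l" by (rule C_Zl_mats[OF M])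
  have "commutes_w (conjP M)" using M C_iff by blast
  then have "commutes_w (lift (conjP M))" using commutes_w_lift[OF conjP_Zl_mats[OF MZ]] by simp
  then have "commutes_w (conjP (lift M))" using conjP_lift[OF MZ] by simp
  then show ?thesis unfolding C_iff using lift_GL2[OF MZ] by simp
qed

lemma unlift_in_C:
  assumes NC: "N \<in> C" and N1: "N 1 = (1,0,0,1)" and N2: "N 2 = (1,0,0,1)"
  shows "unlift N \<in> C"
proof -
  have NZ: "N \<in> Zl_mats l" by (rule C_Zl_mats[OF NC])
  define M where "M = unlift N"
  have MZ: "M \<in> Zl_mats l" unfolding M_def by (rule unlift_Zl_mats[OF NZ N1])
  have pM: "lift M = N" unfolding M_def by (rule lift_unlift[OF NZ N1])
  have "unlift N 1 = (1,0,0,1)" by (rule unlift_level_1[of N]) (rule N2)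
  then have g: "M \<in> GL2 l" using GL2_of_level_1_one[OF MZ] unfolding M_def by simp
  have "commutes_w (conjP N)" using NC C_iff by blast
  then have "commutes_w (lift (conjP M))" using conjP_lift[OF MZ] pM by simp
  then have "commutes_w (conjP M)" using commutes_w_lift[OF conjP_Zl_mats[OF MZ]] by simp
  then show ?thesis unfolding C_iff M_def[symmetric] using g by simp
qed

end

locale haar_open_subgroup = cartan_setting +
  fixes G :: "ladic_mat set" and \<mu> :: "ladic_mat measure"
  assumes sub: "is_subgroup l G C" and opn: "open_in_ladic G C" and haar: "haar_prob l G \<mu>"
begin

lemma G_C: "G \<subseteq> C" using sub unfolding is_subgroup_def by blast
lemma G_Zl_mats: "M \<in> G \<Longrightarrow> M \<in> Zl_mats l" using G_C C_Zl_mats by blast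
lemma lone_G: "lone l \<in> G" using sub unfolding is_subgroup_def by blast
lemma G_mult: "M \<in> G \<Longrightarrow> N \<in> G \<Longrightarrow> lmult l M N \<in> G" using sub unfolding is_subgroup_def by blast
lemma G_inv:
  assumes "M \<in> G" obtains N where "N \<in> G" "lmult l M N = lone l" "lmult l N M = lone l"
  using sub assms unfolding is_subgroup_def by blast

lemma finite_red_G: "finite (red G n)" using red_finite G_Zl_mats by blast

definition cyl :: "nat \<Rightarrow> mat4 \<Rightarrow> ladic_mat set" where
  "cyl n A = {M \<in> G. M n = A}"

lemma haar_props: "space \<mu> = G" "sets \<mu> = sigma_sets G {{M \<in> G. M n = A} | n A. True}" "prob_space \<mu>"
  "\<And>g A. g \<in> G \<Longrightarrow> A \<in> sets \<mu> \<Longrightarrow> emeasure \<mu> ((\<lambda>M. lmult l g M) ` A) = emeasure \<mu> A"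
  using haar unfolding haar_prob_def by blast+

lemma cyl_sets: "cyl n A \<in> sets \<mu>"
  unfolding haar_props(2) cyl_def by (rule sigma_sets.Basic) blast

lemma red_G_mmod: "A \<in> red G n \<Longrightarrow> mmod (L^n) A = A"
  unfolding red_def using Zl_mats_mmod G_Zl_mats by blast

lemma lmult_image_cyl:
  assumes g: "g \<in> G" and A: "A \<in> red G n"
  shows "(\<lambda>M. lmult l g M) ` cyl n A = cyl n (mmod (L^n) (mmul (g n) A))"
proof
  show "(\<lambda>M. lmult l g M) ` cyl n A \<subseteq> cyl n (mmod (L^n) (mmul (g n) A))"
    unfolding cyl_def using G_mult[OF g] by (auto simp: lmult_def)
next
  obtain h where h: "h \<in> G" "lmult l g h = lone l" "lmult l h g = lone l" using G_inv[OF g] by blast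
  show "cyl n (mmod (L^n) (mmul (g n) A)) \<subseteq> (\<lambda>M. lmult l g M) ` cyl n A"
  proof
    fix N assume N: "N \<in> cyl n (mmod (L^n) (mmul (g n) A))"
    have NG: "N \<in> G" and Nn: "N n = mmod (L^n) (mmul (g n) A)" using N unfolding cyl_def by auto
    have "lmult l g (lmult l h N) = lmult l (lmult l g h) N" by (simp add: lmult_assoc)
    also have "\<dots> = N" using h(2) lone_left G_Zl_mats[OF NG] by simp
    finally have e1: "lmult l g (lmult l h N) = N" .
    have "lmult l h N n = mmod (L^n) (mmul (h n) (mmod (L^n) (mmul (g n) A)))"
      unfolding lmult_def Nn by simp
    also have "\<dots> = mmod (L^n) (mmul (mmul (h n) (g n)) A)" by (simp add: mmod_mmul_right mmul_assoc)
    also have "\<dots> = mmod (L^n) (mmul (lmult l h g n) A)"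
      unfolding lmult_def by (simp add: mmod_mmul_left)
    also have "\<dots> = mmod (L^n) A" unfolding h(3) lone_def by (simp add: mmod_mmul_left)
    also have "\<dots> = A" by (rule red_G_mmod[OF A])
    finally have e2: "lmult l h N n = A" .
    have "lmult l h N \<in> cyl n A" unfolding cyl_def using e2 G_mult[OF h(1) NG] by simp
    then show "N \<in> (\<lambda>M. lmult l g M) ` cyl n A" using e1 by force
  qed
qed

lemma emeasure_cyl_eq:
  assumes A: "A \<in> red G n" and B: "B \<in> red G n"
  shows "emeasure \<mu> (cyl n A) = emeasure \<mu> (cyl n B)"
proof -
  obtain MA where MA: "MA \<in> G" "MA n = A" using A unfolding red_def by blast
  obtain MB where MB: "MB \<in> G" "MB n = B" using B unfolding red_def by blast
  obtain h where h: "h \<in> G" "lmult l MA h = lone l" "lmult l h MA = lone l" using G_inv[OF MA(1)] by blast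
  define g where "g = lmult l MB h"
  have g: "g \<in> G" unfolding g_def by (rule G_mult[OF MB(1) h(1)])
  have "mmod (L^n) (mmul (g n) A) = mmod (L^n) (mmul (mmul (MB n) (h n)) (MA n))"
    unfolding g_def lmult_def MA(2)[symmetric] by (simp add: mmod_mmul_left)
  also have "\<dots> = mmod (L^n) (mmul (MB n) (mmod (L^n) (mmul (h n) (MA n))))"
    by (simp add: mmod_mmul_right mmul_assoc)
  also have "\<dots> = mmod (L^n) (mmul (MB n) (lone l n))"
    using h(3) unfolding lmult_def by (metis)
  also have "\<dots> = B" unfolding lone_def using MB red_G_mmod[OF B] by (simp add: mmod_mmul_right)
  finally have "mmod (L^n) (mmul (g n) A) = B" .
  then have "(\<lambda>M. lmult l g M) ` cyl n A = cyl n B" using lmult_image_cyl[OF g A] by simp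
  then show ?thesis using haar_props(4)[OF g cyl_sets[of n A]] by simp
qed

lemma G_eq_Union_cyl: "G = (\<Union>A\<in>red G n. cyl n A)"
  unfolding cyl_def red_def by blast

lemma disjoint_family_cyl: "disjoint_family_on (cyl n) S"
  unfolding disjoint_family_on_def cyl_def by blast

interpretation mu: prob_space \<mu> by (rule haar_props(3))

lemma measure_Union_cyl:
  assumes "T \<subseteq> red G n"
  shows "measure \<mu> (\<Union>A\<in>T. cyl n A) = (\<Sum>A\<in>T. measure \<mu> (cyl n A))"
  using assms finite_red_G[of n] cyl_sets disjoint_family_cyl
  by (intro measure_finite_Union) (auto intro: finite_subset simp: mu.emeasure_finite)

lemma measure_cyl:
  assumes A: "A \<in> red G n"
  shows "measure \<mu> (cyl n A) = 1 / card (red G n)"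
proof -
  have eq: "measure \<mu> (cyl n B) = measure \<mu> (cyl n A)" if "B \<in> red G n" for B
    using emeasure_cyl_eq[OF that A] by (simp add: measure_def)
  have "1 = measure \<mu> G" using mu.prob_space haar_props(1) by simp
  also have "\<dots> = (\<Sum>B\<in>red G n. measure \<mu> (cyl n B))"
    using measure_Union_cyl[of "red G n" n] G_eq_Union_cyl[of n] by simp
  also have "\<dots> = card (red G n) * measure \<mu> (cyl n A)" using eq by simp
  finally have "1 = card (red G n) * measure \<mu> (cyl n A)" .
  then show ?thesis by (metis nonzero_eq_divide_eq mult.commute mult_zero_left zero_neq_one)
qed

lemma measure_Union_cyl_card:
  assumes "T \<subseteq> red G n"
  shows "measure \<mu> (\<Union>A\<in>T. cyl n A) = card T / card (red G n)"
proof -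
  have "(\<Sum>A\<in>T. measure \<mu> (cyl n A)) = (\<Sum>A\<in>T. 1 / card (red G n))"
    by (rule sum.cong) (use measure_cyl assms in auto)
  then have "measure \<mu> (\<Union>A\<in>T. cyl n A) = (\<Sum>A\<in>T. 1 / card (red G n))"
    using measure_Union_cyl[OF assms] by simp
  then show ?thesis by simp
qed

abbreviation "n0 \<equiv> level l C G"

lemma lmult_image_G:
  assumes "Q \<in> G"
  shows "(\<lambda>N. lmult l Q N) ` G = G"
proof
  show "(\<lambda>N. lmult l Q N) ` G \<subseteq> G" using G_mult[OF assms] by blast
  obtain h where h: "h \<in> G" "lmult l Q h = lone l" "lmult l h Q = lone l" using G_inv[OF assms] by blast
  show "G \<subseteq> (\<lambda>N. lmult l Q N) ` G"
  proof
    fix B assume B: "B \<in> G"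
    have "lmult l Q (lmult l h B) = lmult l (lmult l Q h) B" by (simp add: lmult_assoc)
    also have "\<dots> = B" using h(2) lone_left G_Zl_mats[OF B] by simp
    finally show "B \<in> (\<lambda>N. lmult l Q N) ` G" using G_mult[OF h(1) B] by force
  qed
qed

definition cosets :: "ladic_mat set set" where
  "cosets = {(\<lambda>N. lmult l M N) ` G | M. M \<in> C}"

lemma red_coset: "red ((\<lambda>N. lmult l M N) ` G) n = (\<lambda>B. mmod (L ^ n) (mmul (M n) B)) ` red G n"
  unfolding red_def image_image lmult_def by simp

lemma level_index_eq_card: "level_index l n C G = card ((\<lambda>X. red X n) ` cosets)"
proof -
  have "{(\<lambda>B. mmod (int l ^ n) (mmul A B)) ` red G n | A. A \<in> red C n}
      = {(\<lambda>B. mmod (int l ^ n) (mmul (M n) B)) ` red G n | M. M \<in> C}"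
    unfolding red_def by blast
  also have "\<dots> = (\<lambda>X. red X n) ` cosets" unfolding cosets_def using red_coset by blast
  finally show ?thesis unfolding level_index_def by simp
qed

lemma ladic_index_eq_card: "ladic_index l C G = card cosets"
  unfolding ladic_index_def cosets_def ..

lemma finite_red_cosets: "finite ((\<lambda>X. red X n) ` cosets)"
proof -
  have "red X n \<subseteq> {0..<L^n} \<times> {0..<L^n} \<times> {0..<L^n} \<times> {0..<L^n}" if X: "X \<in> cosets" for X
  proof -
    obtain M where M: "M \<in> C" "X = (\<lambda>N. lmult l M N) ` G" using X unfolding cosets_def by blast
    then have "X \<subseteq> Zl_mats l" using lmult_closed C_Zl_mats G_Zl_mats by blast
    then show ?thesis unfolding red_def using Zl_mats_range by blast
  qed
  then have "(\<lambda>X. red X n) ` cosets \<subseteq> Pow ({0..<L^n} \<times> {0..<L^n} \<times> {0..<L^n} \<times> {0..<L^n})" by blast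
  then show ?thesis by (rule finite_subset) simp
qed

lemma G_in_cosets: "G \<in> cosets"
  unfolding cosets_def using lmult_image_G[OF lone_G] lone_C by force

lemma inj_on_red_cosets:
  assumes "cong_sub n \<subseteq> G"
  shows "inj_on (\<lambda>X. red X n) cosets"
proof
  fix X Y assume X: "X \<in> cosets" and Y: "Y \<in> cosets" and eq: "red X n = red Y n"
  obtain M where M: "M \<in> C" "X = (\<lambda>N. lmult l M N) ` G" using X unfolding cosets_def by blast
  obtain M' where M': "M' \<in> C" "Y = (\<lambda>N. lmult l M' N) ` G" using Y unfolding cosets_def by blast
  have "M = lmult l M (lone l)" using lone_right[OF C_Zl_mats[OF M(1)]] by simp
  then have "M \<in> X" using M(2) lone_G by blast
  then have "M n \<in> red Y n" using eq unfolding red_def by blast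
  then obtain N where N: "N \<in> G" "M n = lmult l M' N n" unfolding M'(2) red_def by blast
  obtain Q where Q: "Q \<in> cong_sub n" "M = lmult l (lmult l M' N) Q"
    using same_level_imp_cong_sub[OF M(1) C_mult[OF M'(1)] N(2)] N(1) G_C by blast
  have "X = (\<lambda>K. lmult l M' K) ` ((\<lambda>K. lmult l N K) ` ((\<lambda>K. lmult l Q K) ` G))"
    unfolding M(2) Q(2) by (simp add: image_image lmult_assoc)
  also have "\<dots> = Y" using lmult_image_G[OF N(1)] lmult_image_G[of Q] Q(1) assms M'(2) by auto
  finally show "X = Y" .
qed

lemma exists_cong_sub_subset_G: "\<exists>n>0. cong_sub n \<subseteq> G"
proof -
  obtain n where n: "\<forall>N\<in>C. N n = lone l n \<longrightarrow> N \<in> G"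
    using opn lone_G unfolding open_in_ladic_def by blast
  have "cong_sub (Suc n) \<subseteq> G"
  proof
    fix N assume "N \<in> cong_sub (Suc n)"
    then have N: "N \<in> C" "N (Suc n) = lone l (Suc n)" unfolding cong_sub_def by auto
    have "N n = mmod (L^n) (N (Suc n))" by (rule Zl_matsD[OF C_Zl_mats[OF N(1)]])
    also have "\<dots> = lone l n" unfolding N(2) by (rule Zl_matsD[OF lone_closed, symmetric])
    finally show "N \<in> G" using n N(1) by blast
  qed
  then show ?thesis by blast
qed

lemma level_props: "0 < n0" "level_index l n0 C G = ladic_index l C G"
proof -
  obtain n where n: "n > 0" "cong_sub n \<subseteq> G" using exists_cong_sub_subset_G by blast
  have "level_index l n C G = ladic_index l C G"
    unfolding level_index_eq_card ladic_index_eq_card using card_image[OF inj_on_red_cosets[OF n(2)]] .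
  then have ex: "\<exists>n. 0 < n \<and> level_index l n C G = ladic_index l C G" using n by blast
  show "0 < n0" "level_index l n0 C G = ladic_index l C G"
    unfolding level_def using LeastI_ex[OF ex] by blast+
qed

lemma cong_sub_subset_G_of_level_index:
  assumes "level_index l n C G = ladic_index l C G"
  shows "cong_sub n \<subseteq> G"
proof
  fix N assume N: "N \<in> cong_sub n"
  have NC: "N \<in> C" and Nn: "N n = lone l n" using N unfolding cong_sub_def by auto
  have card_eq: "card ((\<lambda>X. red X n) ` cosets) = card cosets"
    using assms unfolding level_index_eq_card ladic_index_eq_card .
  then have "finite cosets"
    using finite_red_cosets G_in_cosets by (metis card_ge_0_finite card_gt_0_iff empty_iff image_is_empty)
  then have inj: "inj_on (\<lambda>X. red X n) cosets" using card_eq eq_card_imp_inj_on by blast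
  have NS: "(\<lambda>M. lmult l N M) ` G \<in> cosets" unfolding cosets_def using NC by blast
  have "mmod (L ^ n) (mmul (lone l n) B) = B" if "B \<in> red G n" for B
    unfolding lone_def using red_G_mmod[OF that] by (simp add: mmod_mmul_left)
  then have "red ((\<lambda>M. lmult l N M) ` G) n = red G n" unfolding red_coset Nn by simp
  then have "(\<lambda>M. lmult l N M) ` G = G" using inj NS G_in_cosets unfolding inj_on_def by blast
  moreover have "N = lmult l N (lone l)" using lone_right[OF C_Zl_mats[OF NC]] by simp
  ultimately show "N \<in> G" using lone_G by blast
qed

lemma cong_sub_subset_G: "n0 \<le> n \<Longrightarrow> cong_sub n \<subseteq> G"
  using cong_sub_antimono cong_sub_subset_G_of_level_index[OF level_props(2)] by blast

lemma fiber_red_G: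
  assumes KG: "cong_sub n \<subseteq> G" and M: "M \<in> G"
  shows "{A \<in> red G (Suc n). mmod (L^n) A = M n} =
           (\<lambda>E. mmod (L^Suc n) (mmul (M (Suc n)) E)) ` red (cong_sub n) (Suc n)"
proof
  show "(\<lambda>E. mmod (L^Suc n) (mmul (M (Suc n)) E)) ` red (cong_sub n) (Suc n)
          \<subseteq> {A \<in> red G (Suc n). mmod (L^n) A = M n}"
  proof
    fix A assume "A \<in> (\<lambda>E. mmod (L^Suc n) (mmul (M (Suc n)) E)) ` red (cong_sub n) (Suc n)"
    then obtain Q where Q: "Q \<in> cong_sub n" "A = lmult l M Q (Suc n)" unfolding red_def lmult_def by blast
    have MQ: "lmult l M Q \<in> G" using G_mult[OF M] Q(1) KG by blast
    have "mmod (L^n) A = lmult l M Q n"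
      unfolding Q(2) by (rule Zl_matsD[OF G_Zl_mats[OF MQ], symmetric])
    also have "\<dots> = M n"
      using Q(1) G_Zl_mats[OF M] unfolding cong_sub_def lmult_level lone_def
      by (simp add: mmod_mmul_right Zl_mats_mmod)
    finally show "A \<in> {A \<in> red G (Suc n). mmod (L^n) A = M n}" using Q(2) MQ unfolding red_def by blast
  qed
  show "{A \<in> red G (Suc n). mmod (L^n) A = M n}
          \<subseteq> (\<lambda>E. mmod (L^Suc n) (mmul (M (Suc n)) E)) ` red (cong_sub n) (Suc n)"
  proof
    fix A assume A: "A \<in> {A \<in> red G (Suc n). mmod (L^n) A = M n}"
    then obtain N where N: "N \<in> G" "A = N (Suc n)" unfolding red_def by blast
    have "N n = M n" using A N Zl_matsD[OF G_Zl_mats[OF N(1)], of n] by simp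
    then obtain Q where Q: "Q \<in> cong_sub n" "N = lmult l M Q"
      using same_level_imp_cong_sub N(1) M G_C by blast
    then show "A \<in> (\<lambda>E. mmod (L^Suc n) (mmul (M (Suc n)) E)) ` red (cong_sub n) (Suc n)"
      unfolding N(2) red_def lmult_def by blast
  qed
qed

lemma card_fiber_red_G:
  assumes n: "n > 0" and KG: "cong_sub n \<subseteq> G" and B: "B \<in> red G n"
  shows "card {A \<in> red G (Suc n). mmod (L^n) A = B} = l^2"
proof -
  obtain M where M: "M \<in> G" "M n = B" using B unfolding red_def by blast
  have "inj_on (\<lambda>E. mmod (L^Suc n) (mmul (M (Suc n)) E)) (red (cong_sub n) (Suc n))"
    using inj_on_mmul_level M(1) G_C C_GL2 cong_sub_Zl_mats by blast
  then show ?thesis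
    using fiber_red_G[OF KG M(1)] card_red_cong_sub[OF n] M(2) card_image by fastforce
qed

lemma card_red_Suc:
  assumes n: "n > 0" and KG: "cong_sub n \<subseteq> G"
  shows "card (red G (Suc n)) = l^2 * card (red G n)"
proof -
  have U: "red G (Suc n) = (\<Union>B\<in>red G n. {A \<in> red G (Suc n). mmod (L^n) A = B})"
  proof
    show "red G (Suc n) \<subseteq> (\<Union>B\<in>red G n. {A \<in> red G (Suc n). mmod (L^n) A = B})"
    proof
      fix A assume A: "A \<in> red G (Suc n)"
      then obtain N where N: "N \<in> G" "A = N (Suc n)" unfolding red_def by blast
      have "mmod (L^n) A = N n" using N Zl_matsD[OF G_Zl_mats[OF N(1)], of n] by simp
      then show "A \<in> (\<Union>B\<in>red G n. {A \<in> red G (Suc n). mmod (L^n) A = B})"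
        using A N(1) unfolding red_def by blast
    qed
  next
    show "(\<Union>B\<in>red G n. {A \<in> red G (Suc n). mmod (L^n) A = B}) \<subseteq> red G (Suc n)" by (rule UN_least) (rule subsetI, simp)
  qed
  have "card (red G (Suc n)) = card (\<Union>B\<in>red G n. {A \<in> red G (Suc n). mmod (L^n) A = B})"
    by (rule arg_cong[OF U])
  also have "\<dots> = (\<Sum>B\<in>red G n. card {A \<in> red G (Suc n). mmod (L^n) A = B})"
  proof (rule card_UN_disjoint)
    show "finite (red G n)" by (rule finite_red_G)
    show "\<forall>B\<in>red G n. finite {A \<in> red G (Suc n). mmod (L^n) A = B}"
      using finite_red_G[of "Suc n"] by simp
    show "\<forall>B\<in>red G n. \<forall>B'\<in>red G n. B \<noteq> B' \<longrightarrow>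
       {A \<in> red G (Suc n). mmod (L^n) A = B} \<inter> {A \<in> red G (Suc n). mmod (L^n) A = B'} = {}"
      by blast
  qed
  also have "\<dots> = (\<Sum>B\<in>red G n. l^2)" using card_fiber_red_G[OF n KG] by simp
  finally show ?thesis by simp
qed

lemma Mab_iso_cyc2: "Mab l G a b = {M \<in> G. ker_group l M \<cong> cyc2 a (a+b)}"
  unfolding Mab_def cyc2_def ..

lemma Mab_props:
  assumes a: "a \<ge> 1" and M: "M \<in> Mab l G a b"
  shows "M \<in> G" "\<exists>k U1 U2 V1 V2. ker_basis a (a+b) k U1 U2 V1 V2 (ker_set l M)" "M a = lone l a"
proof -
  show MG: "M \<in> G" using M unfolding Mab_iso_cyc2 by blast
  have MZ: "M \<in> Zl_mats l" by (rule G_Zl_mats[OF MG])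
  show ex: "\<exists>k U1 U2 V1 V2. ker_basis a (a+b) k U1 U2 V1 V2 (ker_set l M)"
    using M iso_iff_ker_basis[OF MZ a, of "a+b"] a unfolding Mab_iso_cyc2 by auto
  then obtain k U1 U2 V1 V2 where "ker_basis a (a+b) k U1 U2 V1 V2 (ker_set l M)" by blast
  then have "torsion a \<subseteq> ker_set l M" using torsion_subset_ker_basis by simp
  then show "M a = lone l a" by (rule torsion_subset_ker_imp_lone[OF MZ a])
qed

lemma Mab_of_same_level:
  assumes a: "a \<ge> 1" and M: "M \<in> Mab l G a b" and M': "M' \<in> G"
  and eq: "M' (Suc (a+b)) = M (Suc (a+b))"
  shows "M' \<in> Mab l G a b"
proof -
  have MG: "M \<in> G" and ex: "\<exists>k U1 U2 V1 V2. ker_basis a (a+b) k U1 U2 V1 V2 (ker_set l M)"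
    using Mab_props[OF a M] by auto
  then obtain k U1 U2 V1 V2 where basis: "ker_basis a (a+b) k U1 U2 V1 V2 (ker_set l M)" by blast
  have D: "ker_set l M \<subseteq> torsion (a+b)" using ker_basis_subset_torsion[OF basis] by simp
  have "ker_set l M' = ker_set l M" by (rule ker_set_eq_of_level_eq[OF G_Zl_mats[OF MG] G_Zl_mats[OF M'] eq D])
  then have "ker_group l M' = ker_group l M" unfolding ker_group_def by simp
  then show ?thesis using M M' unfolding Mab_iso_cyc2 by simp
qed

lemma Mab_eq_Union_cyl:
  assumes a: "a \<ge> 1"
  shows "Mab l G a b = (\<Union>A\<in>red (Mab l G a b) (Suc (a+b)). cyl (Suc (a+b)) A)"
proof
  show "Mab l G a b \<subseteq> (\<Union>A\<in>red (Mab l G a b) (Suc (a+b)). cyl (Suc (a+b)) A)"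
    unfolding red_def cyl_def using Mab_props(1)[OF a] by blast
  show "(\<Union>A\<in>red (Mab l G a b) (Suc (a+b)). cyl (Suc (a+b)) A) \<subseteq> Mab l G a b"
  proof
    fix M' assume "M' \<in> (\<Union>A\<in>red (Mab l G a b) (Suc (a+b)). cyl (Suc (a+b)) A)"
    then obtain M where M: "M \<in> Mab l G a b" "M' \<in> G" "M' (Suc (a+b)) = M (Suc (a+b))"
      unfolding red_def cyl_def by blast
    show "M' \<in> Mab l G a b" by (rule Mab_of_same_level[OF a M])
  qed
qed

lemma measure_Mab:
  assumes a: "a \<ge> 1"
  shows "measure \<mu> (Mab l G a b) = card (red (Mab l G a b) (Suc (a+b))) / card (red G (Suc (a+b)))"
proof -
  have sub: "red (Mab l G a b) (Suc (a+b)) \<subseteq> red G (Suc (a+b))"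
    unfolding red_def using Mab_props(1)[OF a] by blast
  show ?thesis using measure_Union_cyl_card[OF sub] Mab_eq_Union_cyl[OF a] by simp
qed

lemma ker_group_lift_iso:
  assumes a: "a \<ge> 1" and M: "M \<in> Mab l G a b"
  shows "ker_group l (lift M) \<cong> cyc2 (Suc a) (Suc a + b)"
proof -
  have MG: "M \<in> G" using Mab_props[OF a M] by simp
  have MZ: "M \<in> Zl_mats l" by (rule G_Zl_mats[OF MG])
  obtain k U1 U2 V1 V2 where basis: "ker_basis a (a+b) k U1 U2 V1 V2 (ker_set l M)" using Mab_props(2)[OF a M] by blast
  have basis': "ker_basis a (a+b) (Suc k) (L*U1) (L*U2) (L*V1) (L*V2) (ker_set l M)" by (rule ker_basis_rescale[OF basis])
  have "ker_basis (Suc a) (Suc (a+b)) (Suc (Suc k)) (L*U1) (L*U2) (L*V1) (L*V2) (ker_set l (lift M))"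
    by (rule ker_basis_lift[OF MZ a _ _ basis']) simp_all
  then show ?thesis using ker_basis_imp_iso by simp
qed

lemma lift_in_Mab:
  assumes a: "a \<ge> n0" and M: "M \<in> Mab l G a b"
  shows "lift M \<in> Mab l G (Suc a) b"
proof -
  have a1: "a \<ge> 1" using a level_props(1) by simp
  have MG: "M \<in> G" and Ma: "M a = lone l a" using Mab_props[OF a1 M] by auto
  have MZ: "M \<in> Zl_mats l" by (rule G_Zl_mats[OF MG])
  have "lift M \<in> C" using lift_in_C G_C MG by blast
  moreover have "lift M (Suc a) = lone l (Suc a)" by (rule lift_cong_one[OF MZ a1 Ma])
  ultimately have "lift M \<in> cong_sub (Suc a)" unfolding cong_sub_def by simp
  then have "lift M \<in> G" using cong_sub_subset_G[of "Suc a"] a by auto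
  then show ?thesis unfolding Mab_iso_cyc2 using ker_group_lift_iso[OF a1 M] by simp
qed

lemma unlift_in_Mab:
  assumes a: "a \<ge> n0" and N: "N \<in> Mab l G (Suc a) b"
  shows "unlift N \<in> Mab l G a b" "lift (unlift N) = N"
proof -
  have a1: "a \<ge> 1" using a level_props(1) by simp
  have NG: "N \<in> G" and Na: "N (Suc a) = lone l (Suc a)" using Mab_props[of "Suc a" N b] N by auto
  have NZ: "N \<in> Zl_mats l" by (rule G_Zl_mats[OF NG])
  have NC: "N \<in> C" using NG G_C by blast
  have N1: "N 1 = (1, 0, 0, 1)" and N2: "N 2 = (1, 0, 0, 1)"
    using level_one_of_le[OF NZ Na] a1 by simp_all
  define M where "M = unlift N"
  have MZ: "M \<in> Zl_mats l" unfolding M_def by (rule unlift_Zl_mats[OF NZ N1])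
  have pM: "lift M = N" unfolding M_def by (rule lift_unlift[OF NZ N1])
  have MC: "M \<in> C" unfolding M_def by (rule unlift_in_C[OF NC N1 N2])
  have Ma: "M a = lone l a" unfolding M_def by (rule unlift_cong_one[of a N, OF a1 Na])
  have MG: "M \<in> G" using cong_sub_subset_G[OF a] MC Ma unfolding cong_sub_def by blast
  obtain k U1 U2 V1 V2 where basis: "ker_basis (Suc a) (Suc a + b) k U1 U2 V1 V2 (ker_set l (lift M))"
    using Mab_props(2)[of "Suc a" N b] N pM by auto
  have basis': "ker_basis (Suc a) (Suc (a+b)) (Suc k) (L*U1) (L*U2) (L*V1) (L*V2) (ker_set l (lift M))"
    using ker_basis_rescale[OF basis] by simp
  have "ker_basis a (a+b) k (L*U1) (L*U2) (L*V1) (L*V2) (ker_set l M)" by (rule ker_basis_unlift[OF MZ basis'])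
  then have "ker_group l M \<cong> cyc2 a (a+b)" by (rule ker_basis_imp_iso)
  then show "unlift N \<in> Mab l G a b" unfolding Mab_iso_cyc2 M_def[symmetric] using MG by simp
  show "lift (unlift N) = N" using pM unfolding M_def .
qed

lemma red_Mab_Suc:
  assumes a: "a \<ge> n0"
  shows "red (Mab l G (Suc a) b) (Suc (Suc (a+b))) =
    (\<lambda>A. mmod (L^Suc (Suc (a+b))) (lift_mat A)) ` red (Mab l G a b) (Suc (a+b))"
    (is "?R = ?f ` red (Mab l G a b) ?N")
proof
  have a1: "a \<ge> 1" using a level_props(1) by simp
  show "?f ` red (Mab l G a b) ?N \<subseteq> ?R"
  proof
    fix B assume "B \<in> ?f ` red (Mab l G a b) ?N"
    then obtain M where M: "M \<in> Mab l G a b" "B = ?f (M ?N)" unfolding red_def by blast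
    have MZ: "M \<in> Zl_mats l" using G_Zl_mats Mab_props(1)[OF a1 M(1)] by blast
    have "B = lift M (Suc ?N)" unfolding M(2) lift_level[OF MZ] ..
    then show "B \<in> ?R" using lift_in_Mab[OF a M(1)] unfolding red_def by blast
  qed
  show "?R \<subseteq> ?f ` red (Mab l G a b) ?N"
  proof
    fix B assume "B \<in> ?R"
    then obtain N where N: "N \<in> Mab l G (Suc a) b" "B = N (Suc ?N)" unfolding red_def by blast
    have M: "unlift N \<in> Mab l G a b" "lift (unlift N) = N" using unlift_in_Mab[OF a N(1)] by auto
    have "unlift N \<in> Zl_mats l" using G_Zl_mats Mab_props(1)[OF a1 M(1)] by blast
    then have "lift (unlift N) (Suc ?N) = ?f (unlift N ?N)" by (rule lift_level)
    then have "B = ?f (unlift N ?N)" using M(2) N(2) by simp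
    then show "B \<in> ?f ` red (Mab l G a b) ?N" using M(1) unfolding red_def by blast
  qed
qed

lemma card_red_Mab_Suc:
  assumes a: "a \<ge> n0"
  shows "card (red (Mab l G (Suc a) b) (Suc (Suc (a+b)))) = card (red (Mab l G a b) (Suc (a+b)))"
proof -
  have a1: "a \<ge> 1" using a level_props(1) by simp
  have norm: "mmod (L^N) A = A" if "A \<in> red (Mab l G a b) N" for A N
    using that red_G_mmod Mab_props(1)[OF a1] unfolding red_def by blast
  have "inj_on (\<lambda>A. mmod (L^Suc (Suc (a+b))) (lift_mat A)) (red (Mab l G a b) (Suc (a+b)))"
  proof (rule inj_onI)
    fix A A' assume "A \<in> red (Mab l G a b) (Suc (a+b))" "A' \<in> red (Mab l G a b) (Suc (a+b))"
      and "mmod (L^Suc (Suc (a+b))) (lift_mat A) = mmod (L^Suc (Suc (a+b))) (lift_mat A')"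
    then show "A = A'" using lift_mat_inj norm by metis
  qed
  then show ?thesis unfolding red_Mab_Suc[OF a] by (rule card_image)
qed

lemma measure_Mab_Suc:
  assumes a: "a \<ge> n0"
  shows "measure \<mu> (Mab l G (Suc a) b) = measure \<mu> (Mab l G a b) / (real l)^2"
proof -
  have a1: "a \<ge> 1" using a level_props(1) by simp
  define N where "N = Suc (a+b)"
  have NG: "cong_sub N \<subseteq> G" using cong_sub_subset_G[of N] a unfolding N_def by simp
  have cr: "card (red G (Suc N)) = l^2 * card (red G N)" by (rule card_red_Suc[OF _ NG]) (simp add: N_def)
  have m1: "measure \<mu> (Mab l G (Suc a) b) = card (red (Mab l G (Suc a) b) (Suc N)) / card (red G (Suc N))"
    using measure_Mab[of "Suc a" b] unfolding N_def by simp
  have m0: "measure \<mu> (Mab l G a b) = card (red (Mab l G a b) N) / card (red G N)"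
    using measure_Mab[OF a1, of b] unfolding N_def by simp
  have cs: "card (red (Mab l G (Suc a) b) (Suc N)) = card (red (Mab l G a b) N)"
    using card_red_Mab_Suc[OF a, of b] unfolding N_def by simp
  show ?thesis unfolding m1 m0 cs cr by simp
qed

lemma measure_Mab_add: "measure \<mu> (Mab l G (n0 + k) b) = measure \<mu> (Mab l G n0 b) / real l ^ (2 * k)"
proof (induction k)
  case 0 then show ?case by simp
next
  case (Suc k)
  have "measure \<mu> (Mab l G (n0 + Suc k) b) = measure \<mu> (Mab l G (n0 + k) b) / (real l)^2"
    using measure_Mab_Suc[of "n0 + k" b] by simp
  also have "\<dots> = measure \<mu> (Mab l G n0 b) / real l ^ (2 * k) / (real l)^2" using Suc by simp
  also have "\<dots> = measure \<mu> (Mab l G n0 b) / real l ^ (2 * Suc k)"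
    by (simp add: power_add power_mult field_simps power2_eq_square)
  finally show ?case .
qed

end

theorem lemma18:
  fixes l :: nat and C G :: "ladic_mat set" and \<mu> :: "ladic_mat measure" and a b :: nat
  assumes "prime l"
    and "cartan l C"
    and "is_subgroup l G C"
    and "open_in_ladic G C"
    and "haar_prob l G \<mu>"
    and "a \<ge> level l C G"
  shows "measure \<mu> (Mab l G a b) =
           measure \<mu> (Mab l G (level l C G) b) / real l ^ (2 * (a - level l C G))"
proof -
  obtain t d P where t: "t \<in> Zl l" and d: "d \<in> Zl l" and P: "P \<in> GL2 l"
    and Cd: "C = {M \<in> GL2 l. \<exists>x \<in> Zl l. \<exists>y \<in> Zl l. lmult l P M = lmult l (quad_elt l t d x y) P}"
    using assms(2) unfolding cartan_def by blast
  interpret haar_open_subgroup l t d P C G \<mu>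
    by unfold_locales (use assms t d P Cd in auto)
  show ?thesis using measure_Mab_add[of "a - n0" b] assms(6) by simp
qed

end
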